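(* Let $d=(d_1,\ldots,d_n)$ be a degree sequence with $d_4\ge 2$, $\sum_i d_i>2n$, and $\mu_{odd}+\mu_1\ge 2$, and let $m=\frac12\sum_i d_i$. There is a bipartite cactus realization of $d$ if and only if $m\le\left\lfloor\frac{4(n-1)-\beta}{3}\right\rfloor$, where $\beta=\max\{\mu_1,\tfrac12(\mu_1+\mu_{odd})\}$.
   Context: A degree sequence is a sequence of integers $d_i\in\{1,\ldots,n-1\}$ with even sum and $d_1\ge\cdots\ge d_n$; a realization is a simple graph on $\{1,\ldots,n\}$ with $\deg(i)=d_i$. A cactus is a connected simple graph in which every edge lies on at most one cycle; a bi-cactus is a bipartite cactus. $\mu_1$ is the number of entries of $d$ equal to $1$, and $\mu_{odd}$ is the number of entries that are odd integers greater than $1$. *)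

theory Defs
  imports Complex_Main
begin

definition simple_graph_on :: "nat \<Rightarrow> nat set set \<Rightarrow> bool" where
  "simple_graph_on n E \<longleftrightarrow> (\<forall>e\<in>E. \<exists>u v. e = {u, v} \<and> u \<noteq> v \<and> u \<in> {1..n} \<and> v \<in> {1..n})"

definition gdeg :: "nat set set \<Rightarrow> nat \<Rightarrow> nat" where
  "gdeg E i = card {e\<in>E. i \<in> e}"

definition is_path :: "nat set set \<Rightarrow> nat list \<Rightarrow> bool" where
  "is_path E vs \<longleftrightarrow> vs \<noteq> [] \<and> (\<forall>i. Suc i < length vs \<longrightarrow> {vs ! i, vs ! Suc i} \<in> E)"

definition connected_graph :: "nat \<Rightarrow> nat set set \<Rightarrow> bool" where
  "connected_graph n E \<longleftrightarrow>
     (\<forall>u\<in>{1..n}. \<forall>v\<in>{1..n}. \<exists>vs. is_path E vs \<and> hd vs = u \<and> last vs = v)"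

definition is_cycle_edges :: "nat set set \<Rightarrow> nat set set \<Rightarrow> bool" where
  "is_cycle_edges E C \<longleftrightarrow> (\<exists>vs. length vs \<ge> 3 \<and> distinct vs \<and>
      C = {{vs ! i, vs ! ((i + 1) mod length vs)} | i. i < length vs} \<and> C \<subseteq> E)"

definition is_cactus :: "nat \<Rightarrow> nat set set \<Rightarrow> bool" where
  "is_cactus n E \<longleftrightarrow> simple_graph_on n E \<and> connected_graph n E \<and>
     (\<forall>e\<in>E. \<forall>C1 C2. is_cycle_edges E C1 \<and> is_cycle_edges E C2 \<and> e \<in> C1 \<and> e \<in> C2 \<longrightarrow> C1 = C2)"

definition is_bipartite :: "nat \<Rightarrow> nat set set \<Rightarrow> bool" where
  "is_bipartite n E \<longleftrightarrow> (\<exists>A. A \<subseteq> {1..n} \<and> (\<forall>e\<in>E. card (e \<inter> A) = 1))"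

definition is_bicactus :: "nat \<Rightarrow> nat set set \<Rightarrow> bool" where
  "is_bicactus n E \<longleftrightarrow> is_cactus n E \<and> is_bipartite n E"

definition degree_sequence :: "nat \<Rightarrow> (nat \<Rightarrow> nat) \<Rightarrow> bool" where
  "degree_sequence n d \<longleftrightarrow> (\<forall>i\<in>{1..n}. 1 \<le> d i \<and> d i \<le> n - 1) \<and>
     even (\<Sum>i=1..n. d i) \<and> (\<forall>i j. 1 \<le> i \<and> i \<le> j \<and> j \<le> n \<longrightarrow> d j \<le> d i)"

definition realizes :: "nat \<Rightarrow> (nat \<Rightarrow> nat) \<Rightarrow> nat set set \<Rightarrow> bool" where
  "realizes n d E \<longleftrightarrow> simple_graph_on n E \<and> (\<forall>i\<in>{1..n}. gdeg E i = d i)"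

definition mu1 :: "nat \<Rightarrow> (nat \<Rightarrow> nat) \<Rightarrow> nat" where
  "mu1 n d = card {i\<in>{1..n}. d i = 1}"

definition mu_odd :: "nat \<Rightarrow> (nat \<Rightarrow> nat) \<Rightarrow> nat" where
  "mu_odd n d = card {i\<in>{1..n}. odd (d i) \<and> d i > 1}"

end

theory Submission
  imports Defs "HOL-Library.Multiset"
begin

fun walk :: "'a set set \<Rightarrow> 'a list \<Rightarrow> bool" where
  "walk E [] \<longleftrightarrow> False"
| "walk E [x] \<longleftrightarrow> True"
| "walk E (x # y # xs) \<longleftrightarrow> {x, y} \<in> E \<and> walk E (y # xs)"

definition walk_edges :: "'a list \<Rightarrow> 'a set set" where
  "walk_edges xs = (\<lambda>(a, b). {a, b}) ` set (zip xs (tl xs))"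

lemma walk_edges_simps [simp]:
  "walk_edges [] = {}"
  "walk_edges [x] = {}"
  "walk_edges (x # y # xs) = insert {x, y} (walk_edges (y # xs))"
  by (simp_all add: walk_edges_def)

lemma set_tl_subset: "set (tl xs) \<subseteq> set xs"
  by (cases xs) auto

lemma walk_edges_conv_nth: "walk_edges xs = {{xs ! i, xs ! Suc i} | i. Suc i < length xs}"
proof -
  have "set (zip xs (tl xs)) = (\<lambda>i. (xs ! i, xs ! Suc i)) ` {i. Suc i < length xs}"
    unfolding set_zip by (auto simp: nth_tl)
  then show ?thesis
    unfolding walk_edges_def by auto
qed

lemma finite_walk_edges [simp]: "finite (walk_edges xs)"
  by (simp add: walk_edges_def)

lemma walk_edges_subset: "e \<in> walk_edges xs \<Longrightarrow> e \<subseteq> set xs"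
  by (induction xs rule: induct_list012) auto

lemma walk_edges_append:
  "xs \<noteq> [] \<Longrightarrow> ys \<noteq> [] \<Longrightarrow>
    walk_edges (xs @ ys) = insert {last xs, hd ys} (walk_edges xs \<union> walk_edges ys)"
  by (induction xs rule: induct_list012) (auto simp: neq_Nil_conv)

lemma walk_edges_snoc: "xs \<noteq> [] \<Longrightarrow> walk_edges (xs @ [y]) = insert {last xs, y} (walk_edges xs)"
  by (simp add: walk_edges_append)

lemma walk_edges_join:
  assumes "xs \<noteq> []" "ys \<noteq> []" "last xs = hd ys"
  shows "walk_edges (xs @ tl ys) = walk_edges xs \<union> walk_edges ys"
  using assms by (cases ys; cases "tl ys") (auto simp: walk_edges_append)

lemma walk_edges_rev [simp]: "walk_edges (rev xs) = walk_edges xs"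
proof (induction xs)
  case (Cons x xs)
  show ?case
  proof (cases xs)
    case (Cons y ys)
    have "walk_edges (rev (x # xs)) = insert {y, x} (walk_edges (rev xs))"
      using walk_edges_snoc[of "rev xs" x] Cons by simp
    then show ?thesis
      using Cons.IH Cons by (simp add: insert_commute)
  qed simp
qed simp

lemma card_walk_edges: "distinct xs \<Longrightarrow> card (walk_edges xs) = length xs - 1"
proof (induction xs rule: induct_list012)
  case (3 x y xs)
  then have "{x, y} \<notin> walk_edges (y # xs)"
    using walk_edges_subset by fastforce
  then show ?case using 3 by simp
qed simp_all

lemma walk_edges_append_subset: "walk_edges xs \<union> walk_edges ys \<subseteq> walk_edges (xs @ ys)"
  by (cases "xs = []"; cases "ys = []") (auto simp: walk_edges_append)

lemma walk_iff_walk_edges: "walk E xs \<longleftrightarrow> xs \<noteq> [] \<and> walk_edges xs \<subseteq> E"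
  by (induction E xs rule: walk.induct) auto

lemma walk_nonempty: "walk E xs \<Longrightarrow> xs \<noteq> []"
  by (simp add: walk_iff_walk_edges)

lemma walk_walk_edges: "xs \<noteq> [] \<Longrightarrow> walk (walk_edges xs) xs"
  by (simp add: walk_iff_walk_edges)

lemma walk_mono: "walk E xs \<Longrightarrow> E \<subseteq> F \<Longrightarrow> walk F xs"
  by (auto simp: walk_iff_walk_edges)

lemma walk_appendD1: "walk E (xs @ ys) \<Longrightarrow> xs \<noteq> [] \<Longrightarrow> walk E xs"
  using walk_edges_append_subset by (fastforce simp: walk_iff_walk_edges)

lemma walk_appendD2: "walk E (xs @ ys) \<Longrightarrow> ys \<noteq> [] \<Longrightarrow> walk E ys"
  using walk_edges_append_subset by (fastforce simp: walk_iff_walk_edges)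

lemma walk_append:
  "xs \<noteq> [] \<Longrightarrow> ys \<noteq> [] \<Longrightarrow>
    walk E (xs @ ys) \<longleftrightarrow> walk E xs \<and> {last xs, hd ys} \<in> E \<and> walk E ys"
  by (auto simp: walk_iff_walk_edges walk_edges_append)

lemma walk_join: "walk E xs \<Longrightarrow> walk E ys \<Longrightarrow> last xs = hd ys \<Longrightarrow> walk E (xs @ tl ys)"
  by (auto simp: walk_iff_walk_edges walk_edges_join)

lemma last_append_tl: "xs \<noteq> [] \<Longrightarrow> ys \<noteq> [] \<Longrightarrow> last xs = hd ys \<Longrightarrow> last (xs @ tl ys) = last ys"
  by (cases ys; cases "tl ys") auto

lemma walk_rev: "walk E xs \<Longrightarrow> walk E (rev xs)"
  by (simp add: walk_iff_walk_edges)

lemma walk_map: "walk E xs \<Longrightarrow> walk ((`) f ` E) (map f xs)"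
proof (induction E xs rule: walk.induct)
  case (3 E x y xs)
  then have e: "{x, y} \<in> E" and w: "walk E (y # xs)"
    by simp_all
  have "{f x, f y} \<in> (`) f ` E"
    using imageI[OF e, of "(`) f"] by simp
  then show ?case
    using "3.IH"[OF w] by simp
qed simp_all

lemma walk_restrict: "walk E xs \<Longrightarrow> set xs \<subseteq> S \<Longrightarrow> walk {e \<in> E. e \<subseteq> S} xs"
  by (auto simp: walk_iff_walk_edges dest: walk_edges_subset)

lemma walk_set_subset:
  assumes "walk E xs" "\<forall>e\<in>E. e \<subseteq> V" "hd xs \<in> V"
  shows "set xs \<subseteq> V"
  using assms
proof (induction E xs rule: walk.induct)
  case (3 E x y xs)
  then have "y \<in> V"
    by auto
  then show ?case
    using 3 by auto
qed simp_all

lemma walk_prefix: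
  assumes "walk E xs" "y \<in> set xs"
  shows "\<exists>ys. walk E ys \<and> hd ys = hd xs \<and> last ys = y \<and> set ys \<subseteq> set xs"
proof -
  obtain i where i: "i < length xs" "xs ! i = y"
    using assms(2) by (meson in_set_conv_nth)
  define ys where "ys = take (Suc i) xs"
  have ys: "ys = take i xs @ [y]"
    unfolding ys_def using i by (simp add: take_Suc_conv_app_nth)
  have "walk E (ys @ drop (Suc i) xs)"
    using assms(1) unfolding ys_def by simp
  then have "walk E ys"
    using walk_appendD1 ys by blast
  moreover have "hd ys = hd xs"
    using i unfolding ys_def by (cases xs) auto
  moreover have "set ys \<subseteq> set xs"
    unfolding ys_def by (rule set_take_subset)
  ultimately show ?thesis
    using ys by (intro exI[of _ ys]) simp
qed

lemma walk_to_path: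
  assumes "walk E xs"
  shows "\<exists>ys. walk E ys \<and> distinct ys \<and> hd ys = hd xs \<and> last ys = last xs \<and> set ys \<subseteq> set xs"
  using assms
proof (induction "length xs" arbitrary: xs rule: less_induct)
  case less
  show ?case
  proof (cases "distinct xs")
    case False
    then obtain as y bs cs where xs: "xs = as @ [y] @ bs @ [y] @ cs"
      using not_distinct_decomp by blast
    have "walk E (as @ [y])" "walk E (y # cs)"
      using walk_appendD1[of E "as @ [y]" "bs @ y # cs"] walk_appendD2[of E "as @ y # bs" "y # cs"]
        less.prems unfolding xs by simp_all
    then have "walk E (as @ y # cs)"
      using walk_join[of E "as @ [y]" "y # cs"] by simp
    moreover have "hd (as @ y # cs) = hd xs" "last (as @ y # cs) = last xs"
      "set (as @ y # cs) \<subseteq> set xs"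
      unfolding xs by (cases as; cases cs; auto)+
    moreover have "length (as @ y # cs) < length xs"
      unfolding xs by simp
    ultimately obtain zs where "walk E zs" "distinct zs" "hd zs = hd xs" "last zs = last xs"
      "set zs \<subseteq> set (as @ y # cs)"
      using less.hyps[of "as @ y # cs"] by auto
    then show ?thesis
      using \<open>set (as @ y # cs) \<subseteq> set xs\<close> by (meson order_trans)
  qed (use less.prems in blast)
qed

lemma walk_crossing_edge:
  assumes "walk E xs" "hd xs \<notin> S" "last xs \<in> S"
  shows "\<exists>a b. {a, b} \<in> E \<and> a \<notin> S \<and> b \<in> S"
  using assms by (induction E xs rule: walk.induct) (auto split: if_splits)

lemma walk_first_edge:
  assumes "walk E xs" "hd xs \<noteq> last xs"
  shows "\<exists>c. {hd xs, c} \<in> E"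
  using assms by (cases xs; cases "tl xs") auto

lemma walk_between:
  assumes "walk E xs" "x \<in> set xs" "y \<in> set xs"
  shows "\<exists>W. walk E W \<and> hd W = x \<and> last W = y"
proof -
  obtain Wx where Wx: "walk E Wx" "hd Wx = hd xs" "last Wx = x"
    using walk_prefix[OF assms(1,2)] by blast
  obtain Wy where Wy: "walk E Wy" "hd Wy = hd xs" "last Wy = y"
    using walk_prefix[OF assms(1,3)] by blast
  have "Wx \<noteq> []" "Wy \<noteq> []"
    using Wx Wy walk_nonempty by auto
  then show ?thesis
    using walk_join[OF walk_rev[OF Wx(1)] Wy(1)] last_append_tl[of "rev Wx" Wy] Wx Wy
    by (intro exI[of _ "rev Wx @ tl Wy"]) (simp add: hd_rev last_rev)
qed

lemma walk_edges_map: "walk_edges (map f xs) = (`) f ` walk_edges xs"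
  by (induction xs rule: induct_list012) auto

definition cycle_edges :: "'a list \<Rightarrow> 'a set set" where
  "cycle_edges vs = {{vs ! i, vs ! ((i + 1) mod length vs)} | i. i < length vs}"

definition is_cycle :: "'a set set \<Rightarrow> 'a list \<Rightarrow> bool" where
  "is_cycle E vs \<longleftrightarrow> 3 \<le> length vs \<and> distinct vs \<and> cycle_edges vs \<subseteq> E"

lemma cycle_edges_conv_walk_edges:
  assumes "vs \<noteq> []"
  shows "cycle_edges vs = insert {last vs, hd vs} (walk_edges vs)"
proof (intro equalityI subsetI)
  fix e assume "e \<in> cycle_edges vs"
  then obtain i where e: "e = {vs ! i, vs ! ((i + 1) mod length vs)}" "i < length vs"
    unfolding cycle_edges_def by blast
  show "e \<in> insert {last vs, hd vs} (walk_edges vs)"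
  proof (cases "Suc i < length vs")
    case True
    then show ?thesis
      using e unfolding walk_edges_conv_nth by auto
  next
    case False
    then have "i = length vs - 1"
      using e by simp
    then show ?thesis
      using e assms by (simp add: last_conv_nth hd_conv_nth)
  qed
next
  fix e assume "e \<in> insert {last vs, hd vs} (walk_edges vs)"
  then show "e \<in> cycle_edges vs"
  proof
    assume e: "e = {last vs, hd vs}"
    have "(length vs - 1 + 1) mod length vs = 0"
      using assms by simp
    then show ?thesis
      unfolding cycle_edges_def e using assms
      by (intro CollectI exI[of _ "length vs - 1"]) (simp add: last_conv_nth hd_conv_nth)
  next
    assume "e \<in> walk_edges vs"
    then obtain i where "e = {vs ! i, vs ! Suc i}" "Suc i < length vs"
      unfolding walk_edges_conv_nth by blast
    then show ?thesis
      unfolding cycle_edges_def by (intro CollectI exI[of _ i]) auto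
  qed
qed

lemma finite_cycle_edges [simp]: "finite (cycle_edges vs)"
  by (cases "vs = []") (simp_all add: cycle_edges_conv_walk_edges cycle_edges_def)

lemma cycle_edges_subset: "e \<in> cycle_edges vs \<Longrightarrow> e \<subseteq> set vs"
  by (cases "vs = []")
    (auto simp: cycle_edges_def cycle_edges_conv_walk_edges dest: walk_edges_subset)

lemma cycle_edges_nonempty: "e \<in> cycle_edges vs \<Longrightarrow> e \<noteq> {}"
  by (auto simp: cycle_edges_def)

lemma cycle_edges_map: "cycle_edges (map f vs) = (`) f ` cycle_edges vs"
  by (cases "vs = []")
    (simp_all add: cycle_edges_conv_walk_edges walk_edges_map hd_map last_map, simp add: cycle_edges_def)

lemma cycle_edges_rotate1: "cycle_edges (rotate1 vs) = cycle_edges vs"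
proof (cases vs)
  case (Cons a ys)
  show ?thesis
  proof (cases "ys = []")
    case False
    have "walk_edges (a # ys) = insert {a, hd ys} (walk_edges ys)"
      using False by (cases ys) auto
    moreover have "walk_edges (ys @ [a]) = insert {last ys, a} (walk_edges ys)"
      using False by (rule walk_edges_snoc)
    ultimately show ?thesis
      using Cons False by (simp add: cycle_edges_conv_walk_edges insert_commute)
  qed (use Cons in simp)
qed simp

lemma cycle_edges_rotate: "cycle_edges (rotate n vs) = cycle_edges vs"
  by (induction n) (simp_all add: cycle_edges_rotate1)

lemma is_cycle_rotate: "is_cycle E vs \<Longrightarrow> is_cycle E (rotate n vs)"
  by (simp add: is_cycle_def cycle_edges_rotate)

lemma is_cycle_mono: "is_cycle F vs \<Longrightarrow> F \<subseteq> E \<Longrightarrow> is_cycle E vs"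
  unfolding is_cycle_def by auto

lemma is_cycle_walk: "is_cycle E vs \<Longrightarrow> walk E vs"
  using cycle_edges_conv_walk_edges[of vs] unfolding is_cycle_def walk_iff_walk_edges
  by (cases "vs = []") auto

lemma is_cycle_closing_edge: "is_cycle E vs \<Longrightarrow> {last vs, hd vs} \<in> cycle_edges vs"
  using cycle_edges_conv_walk_edges[of vs] unfolding is_cycle_def by (cases "vs = []") auto

lemma is_cycle_map: "is_cycle E vs \<Longrightarrow> inj_on f (set vs) \<Longrightarrow> is_cycle ((`) f ` E) (map f vs)"
  unfolding is_cycle_def by (auto simp: distinct_map cycle_edges_map)

lemma distinct_hd_neq_last: "distinct xs \<Longrightarrow> 2 \<le> length xs \<Longrightarrow> hd xs \<noteq> last xs"
  by (cases xs) auto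

lemma is_cycle_snoc_decomp:
  assumes "is_cycle E vs"
  obtains B w where "vs = B @ [w]" "2 \<le> length B" "distinct B" "w \<notin> set B" "hd B \<noteq> last B"
    "cycle_edges vs = insert {w, hd B} (insert {last B, w} (walk_edges B))"
proof
  have vs: "3 \<le> length vs" "distinct vs"
    using assms unfolding is_cycle_def by auto
  then have "vs \<noteq> []" "butlast vs \<noteq> []"
    by (auto simp: butlast_conv_take)
  then have B: "vs = butlast vs @ [last vs]" "butlast vs \<noteq> []"
    by simp_all
  show "vs = butlast vs @ [last vs]"
    using B by simp
  have "distinct (butlast vs @ [last vs])"
    using B(1) vs(2) by simp
  then show "2 \<le> length (butlast vs)" "distinct (butlast vs)" "last vs \<notin> set (butlast vs)"
    using vs by simp_all
  then show "hd (butlast vs) \<noteq> last (butlast vs)"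
    by (simp add: distinct_hd_neq_last)
  have "hd vs = hd (butlast vs)"
    using B by (metis hd_append2)
  then show "cycle_edges vs =
      insert {last vs, hd (butlast vs)} (insert {last (butlast vs), last vs} (walk_edges (butlast vs)))"
    using B walk_edges_snoc[OF B(2), of "last vs"] cycle_edges_conv_walk_edges[of vs] by auto
qed

lemma card_cycle_edges: "is_cycle E vs \<Longrightarrow> card (cycle_edges vs) = length vs"
proof -
  assume "is_cycle E vs"
  then obtain B w where B: "vs = B @ [w]" "2 \<le> length B" "distinct B" "w \<notin> set B" "hd B \<noteq> last B"
    "cycle_edges vs = insert {w, hd B} (insert {last B, w} (walk_edges B))"
    by (rule is_cycle_snoc_decomp)
  have "{last B, w} \<notin> walk_edges B" "{w, hd B} \<notin> walk_edges B"
    using B(4) walk_edges_subset by blast+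
  moreover have "{w, hd B} \<noteq> {last B, w}"
    using B(5) by (auto simp: doubleton_eq_iff)
  ultimately show ?thesis
    using B card_walk_edges[OF B(3)] by simp
qed

lemma is_cycle_rotate_to_last:
  assumes "is_cycle E vs" "w \<in> set vs"
  obtains vs' where "is_cycle E vs'" "cycle_edges vs' = cycle_edges vs" "set vs' = set vs"
    "last vs' = w"
proof -
  obtain j where j: "j < length vs" "vs ! j = w"
    using assms(2) by (meson in_set_conv_nth)
  define vs' where "vs' = rotate (Suc j) vs"
  have "length vs' = length vs"
    unfolding vs'_def by simp
  then have "last vs' = vs' ! (length vs - 1)"
    using j by (subst last_conv_nth) auto
  also have "\<dots> = vs ! ((Suc j + (length vs - 1)) mod length vs)"
    unfolding vs'_def by (rule nth_rotate) (use j in simp)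
  also have "Suc j + (length vs - 1) = j + length vs"
    using j by simp
  finally have "last vs' = w"
    using j by simp
  moreover have "is_cycle E vs'" "cycle_edges vs' = cycle_edges vs" "set vs' = set vs"
    unfolding vs'_def using is_cycle_rotate[OF assms(1)] cycle_edges_rotate
    by (simp_all del: rotate_Suc)
  ultimately show ?thesis
    using that by blast
qed

lemma card_cycle_edges_at:
  assumes "is_cycle E vs" "x \<in> set vs"
  shows "card {e \<in> cycle_edges vs. x \<in> e} = 2"
proof -
  obtain vs' where vs': "is_cycle E vs'" "cycle_edges vs' = cycle_edges vs" "last vs' = x"
    using is_cycle_rotate_to_last[OF assms] by metis
  obtain B where B: "vs' = B @ [x]" "x \<notin> set B" "hd B \<noteq> last B"
    "cycle_edges vs' = insert {x, hd B} (insert {last B, x} (walk_edges B))"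
    using is_cycle_snoc_decomp[OF vs'(1)] vs'(3) by (metis last_snoc)
  have "x \<notin> e" if "e \<in> walk_edges B" for e
    using that B(2) walk_edges_subset by blast
  then have "{e \<in> cycle_edges vs. x \<in> e} = {{x, hd B}, {last B, x}}"
    using B(4) vs'(2) by auto
  moreover have "{x, hd B} \<noteq> {last B, x}"
    using B(3) by (auto simp: doubleton_eq_iff)
  ultimately show ?thesis
    by simp
qed

lemma is_cycle_vertex_in_edge:
  assumes "is_cycle E vs" "x \<in> set vs"
  shows "\<exists>e\<in>cycle_edges vs. x \<in> e"
proof -
  have "{e \<in> cycle_edges vs. x \<in> e} \<noteq> {}"
    using card_cycle_edges_at[OF assms] by (metis card.empty zero_neq_numeral)
  then show ?thesis
    by blast
qed

lemma cycle_edges_at_eq_pair: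
  assumes "is_cycle E vs" "x \<in> set vs" "{e \<in> cycle_edges vs. x \<in> e} \<subseteq> {e1, e2}"
  shows "{e \<in> cycle_edges vs. x \<in> e} = {e1, e2}"
proof (rule card_subset_eq[OF _ assms(3)])
  have "card {e1, e2} \<le> 2"
    by (cases "e1 = e2") simp_all
  moreover have "card {e \<in> cycle_edges vs. x \<in> e} \<le> card {e1, e2}"
    using assms(3) by (rule card_mono[rotated]) simp
  ultimately show "card {e \<in> cycle_edges vs. x \<in> e} = card {e1, e2}"
    using card_cycle_edges_at[OF assms(1,2)] by simp
qed simp

lemma walk_alternates:
  assumes "walk E xs" "distinct xs" "\<forall>e\<in>E. card (e \<inter> A) = 1"
  shows "(hd xs \<in> A \<longleftrightarrow> last xs \<in> A) \<longleftrightarrow> odd (length xs)"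
  using assms
proof (induction E xs rule: walk.induct)
  case (3 E x y xs)
  then have "card ({x, y} \<inter> A) = 1" "x \<noteq> y"
    by auto
  then have "x \<in> A \<longleftrightarrow> y \<notin> A"
    by (cases "x \<in> A"; cases "y \<in> A") auto
  then show ?case
    using 3 by auto
qed simp_all

lemma is_cycle_even_length:
  assumes "is_cycle E vs" "\<forall>e\<in>E. card (e \<inter> A) = 1"
  shows "even (length vs)"
proof -
  have "3 \<le> length vs" "distinct vs" "cycle_edges vs \<subseteq> E"
    using assms(1) unfolding is_cycle_def by auto
  then have vs: "distinct vs" "hd vs \<noteq> last vs" "{last vs, hd vs} \<in> E"
    using is_cycle_closing_edge[OF assms(1)] distinct_hd_neq_last[of vs] by auto
  then have "card ({last vs, hd vs} \<inter> A) = 1"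
    using assms(2) by blast
  then have "\<not> (hd vs \<in> A \<longleftrightarrow> last vs \<in> A)"
    using vs(2) by (cases "hd vs \<in> A"; cases "last vs \<in> A") auto
  then show ?thesis
    using walk_alternates[OF is_cycle_walk[OF assms(1)] vs(1) assms(2)] by simp
qed

lemma cycle_through_edge:
  assumes "walk E W" "hd W = v" "last W = u" "u \<noteq> v" "{u, v} \<in> E" "{u, v} \<notin> walk_edges W"
  obtains P where "is_cycle E P" "{u, v} \<in> cycle_edges P"
    "cycle_edges P \<subseteq> insert {u, v} (walk_edges W)"
proof -
  have "walk (walk_edges W) W"
    using assms(1) walk_nonempty walk_walk_edges by blast
  then obtain P where P: "walk (walk_edges W) P" "distinct P" "hd P = v" "last P = u"
    using walk_to_path[of "walk_edges W" W] unfolding assms(2,3) by blast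
  have PW: "walk_edges P \<subseteq> walk_edges W" "P \<noteq> []"
    using P(1) by (simp_all add: walk_iff_walk_edges)
  have "length P \<noteq> 1"
    using P(3,4) assms(4) by (auto simp: length_Suc_conv)
  moreover have "length P \<noteq> 2"
  proof
    assume "length P = 2"
    then obtain a b where "P = [a, b]"
      by (auto simp: length_Suc_conv numeral_2_eq_2)
    then have "{v, u} \<in> walk_edges W"
      using P(3,4) PW(1) by simp
    then show False
      using assms(6) by (simp add: insert_commute)
  qed
  ultimately have "3 \<le> length P"
    using PW(2) by (cases "length P") auto
  moreover have C: "cycle_edges P = insert {u, v} (walk_edges P)"
    using cycle_edges_conv_walk_edges[OF PW(2)] P(3,4) by simp
  moreover have "walk_edges W \<subseteq> E"
    using assms(1) by (simp add: walk_iff_walk_edges)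
  ultimately have "is_cycle E P"
    unfolding is_cycle_def using P(2) PW(1) assms(5) by auto
  then show ?thesis
    using that C PW(1) by auto
qed

lemma is_cycle_in_cycle_edges:
  assumes vs: "is_cycle E vs" and P: "is_cycle (cycle_edges vs) P"
  shows "cycle_edges P = cycle_edges vs"
proof -
  let ?F = "cycle_edges vs" and ?C = "cycle_edges P"
  have CF: "?C \<subseteq> ?F"
    using P unfolding is_cycle_def by simp
  have PF: "set P \<subseteq> set vs"
  proof
    fix x assume "x \<in> set P"
    then obtain e where "e \<in> ?C" "x \<in> e"
      using is_cycle_vertex_in_edge[OF P] by blast
    then show "x \<in> set vs"
      using CF cycle_edges_subset by blast
  qed
  have at: "{e \<in> ?F. x \<in> e} \<subseteq> ?C" if x: "x \<in> set P" for x
  proof -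
    have sub: "{e \<in> ?C. x \<in> e} \<subseteq> {e \<in> ?F. x \<in> e}"
      using CF by blast
    have "card {e \<in> ?C. x \<in> e} = card {e \<in> ?F. x \<in> e}"
      using card_cycle_edges_at[OF P x] card_cycle_edges_at[OF vs] PF x by auto
    then have "{e \<in> ?C. x \<in> e} = {e \<in> ?F. x \<in> e}"
      using card_subset_eq[OF _ sub] by simp
    then show ?thesis
      by blast
  qed
  have "set vs \<subseteq> set P"
  proof
    fix y assume y: "y \<in> set vs"
    show "y \<in> set P"
    proof (rule ccontr)
      assume yP: "y \<notin> set P"
      have hdP: "hd P \<in> set P"
        using P unfolding is_cycle_def by (auto intro!: hd_in_set)
      have "is_cycle ?F vs"
        using vs unfolding is_cycle_def by simp
      then obtain W where W: "walk ?F W" "hd W = y" "last W = hd P"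
        using walk_between[OF is_cycle_walk y] hdP PF by blast
      have "\<exists>a b. {a, b} \<in> ?F \<and> a \<notin> set P \<and> b \<in> set P"
        using walk_crossing_edge[of ?F W "set P"] W yP hdP by simp
      then obtain a b where ab: "{a, b} \<in> ?F" "a \<notin> set P" "b \<in> set P"
        by blast
      then have "{a, b} \<in> ?C"
        using at[OF ab(3)] by blast
      then show False
        using ab(2) cycle_edges_subset by blast
    qed
  qed
  have "?F \<subseteq> ?C"
  proof
    fix e assume e: "e \<in> ?F"
    then obtain x where "x \<in> e"
      using cycle_edges_nonempty by blast
    moreover have "x \<in> set P"
      using e \<open>x \<in> e\<close> cycle_edges_subset \<open>set vs \<subseteq> set P\<close> by blast
    ultimately show "e \<in> ?C"
      using at e by blast
  qed
  then show ?thesis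
    using CF by blast
qed

definition simple_graph :: "'a set \<Rightarrow> 'a set set \<Rightarrow> bool" where
  "simple_graph V E \<longleftrightarrow> (\<forall>e\<in>E. \<exists>u v. e = {u, v} \<and> u \<noteq> v \<and> u \<in> V \<and> v \<in> V)"

definition graph_connected :: "'a set \<Rightarrow> 'a set set \<Rightarrow> bool" where
  "graph_connected V E \<longleftrightarrow> (\<forall>u\<in>V. \<forall>v\<in>V. \<exists>W. walk E W \<and> hd W = u \<and> last W = v)"

definition cycles_edge_disjoint :: "'a set set \<Rightarrow> bool" where
  "cycles_edge_disjoint E \<longleftrightarrow> (\<forall>e\<in>E. \<forall>C1 C2. is_cycle E C1 \<and> is_cycle E C2 \<and>
     e \<in> cycle_edges C1 \<and> e \<in> cycle_edges C2 \<longrightarrow> cycle_edges C1 = cycle_edges C2)"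

definition bipartite :: "'a set set \<Rightarrow> bool" where
  "bipartite E \<longleftrightarrow> (\<exists>A. \<forall>e\<in>E. card (e \<inter> A) = 1)"

definition bicactus :: "'a set \<Rightarrow> 'a set set \<Rightarrow> bool" where
  "bicactus V E \<longleftrightarrow> finite V \<and> V \<noteq> {} \<and> simple_graph V E \<and> graph_connected V E \<and>
     cycles_edge_disjoint E \<and> bipartite E"

lemma simple_graph_edgeE:
  assumes "simple_graph V E" "e \<in> E"
  obtains u v where "e = {u, v}" "u \<noteq> v" "u \<in> V" "v \<in> V"
  using assms unfolding simple_graph_def by meson

lemma simple_graph_edge_subset: "simple_graph V E \<Longrightarrow> e \<in> E \<Longrightarrow> e \<subseteq> V"
  by (metis simple_graph_edgeE empty_subsetI insert_subset)

lemma simple_graph_edgeD: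
  assumes "simple_graph V E" "{a, b} \<in> E"
  shows "a \<noteq> b" "a \<in> V" "b \<in> V"
proof -
  obtain u v where "{a, b} = {u, v}" "u \<noteq> v" "u \<in> V" "v \<in> V"
    using simple_graph_edgeE[OF assms] by metis
  then show "a \<noteq> b" "a \<in> V" "b \<in> V"
    by (auto simp: doubleton_eq_iff)
qed

lemma simple_graph_finite: "finite V \<Longrightarrow> simple_graph V E \<Longrightarrow> finite E"
  by (rule finite_subset[of E "Pow V"]) (auto dest: simple_graph_edge_subset)

lemma simple_graph_induced:
  assumes "simple_graph V E"
  shows "simple_graph S {e \<in> E. e \<subseteq> S}"
  unfolding simple_graph_def
proof
  fix e assume e: "e \<in> {e \<in> E. e \<subseteq> S}"
  then obtain u v where "e = {u, v}" "u \<noteq> v"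
    using simple_graph_edgeE[OF assms] by blast
  then show "\<exists>u v. e = {u, v} \<and> u \<noteq> v \<and> u \<in> S \<and> v \<in> S"
    using e by auto
qed

lemma graph_connected_from_root:
  assumes "\<forall>u\<in>V. \<exists>W. walk E W \<and> hd W = r \<and> last W = u"
  shows "graph_connected V E"
  unfolding graph_connected_def
proof (intro ballI)
  fix u v assume "u \<in> V" "v \<in> V"
  then obtain Wu Wv where W: "walk E Wu" "hd Wu = r" "last Wu = u" "walk E Wv" "hd Wv = r" "last Wv = v"
    using assms by meson
  then have "Wu \<noteq> []" "Wv \<noteq> []"
    using walk_nonempty by blast+
  then show "\<exists>W. walk E W \<and> hd W = u \<and> last W = v"
    using walk_join[OF walk_rev[OF W(1)] W(4)] last_append_tl[of "rev Wu" Wv] W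
    by (intro exI[of _ "rev Wu @ tl Wv"]) (simp add: hd_rev last_rev)
qed

lemma graph_connected_mono: "graph_connected V E \<Longrightarrow> E \<subseteq> F \<Longrightarrow> graph_connected V F"
  unfolding graph_connected_def using walk_mono by metis

lemma cycles_edge_disjoint_mono: "cycles_edge_disjoint E \<Longrightarrow> F \<subseteq> E \<Longrightarrow> cycles_edge_disjoint F"
  unfolding cycles_edge_disjoint_def using is_cycle_mono by blast

lemma cycles_edge_disjointD:
  "cycles_edge_disjoint E \<Longrightarrow> e \<in> E \<Longrightarrow> is_cycle E C1 \<Longrightarrow> is_cycle E C2 \<Longrightarrow>
    e \<in> cycle_edges C1 \<Longrightarrow> e \<in> cycle_edges C2 \<Longrightarrow> cycle_edges C1 = cycle_edges C2"
  unfolding cycles_edge_disjoint_def by blast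

lemma bipartite_mono: "bipartite E \<Longrightarrow> F \<subseteq> E \<Longrightarrow> bipartite F"
  unfolding bipartite_def by blast

lemma gdeg_Un:
  "finite E1 \<Longrightarrow> finite E2 \<Longrightarrow> E1 \<inter> E2 = {} \<Longrightarrow> gdeg (E1 \<union> E2) v = gdeg E1 v + gdeg E2 v"
proof -
  assume "finite E1" "finite E2" "E1 \<inter> E2 = {}"
  moreover have "{e \<in> E1 \<union> E2. v \<in> e} = {e \<in> E1. v \<in> e} \<union> {e \<in> E2. v \<in> e}"
    by blast
  ultimately show ?thesis
    unfolding gdeg_def by (simp add: card_Un_disjoint disjoint_iff)
qed

lemma gdeg_eq_0: "simple_graph V E \<Longrightarrow> v \<notin> V \<Longrightarrow> gdeg E v = 0"
proof -
  assume "simple_graph V E" "v \<notin> V"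
  then have "{e \<in> E. v \<in> e} = {}"
    using simple_graph_edge_subset by blast
  then show ?thesis
    unfolding gdeg_def by (metis card.empty)
qed

lemma gdeg_pos: "finite E \<Longrightarrow> e \<in> E \<Longrightarrow> v \<in> e \<Longrightarrow> 1 \<le> gdeg E v"
proof -
  assume "finite E" "e \<in> E" "v \<in> e"
  then have "finite {e \<in> E. v \<in> e}" "{e \<in> E. v \<in> e} \<noteq> {}"
    by auto
  then show ?thesis
    unfolding gdeg_def by (simp add: Suc_le_eq card_gt_0_iff)
qed

definition reach_avoiding :: "'a set set \<Rightarrow> 'a \<Rightarrow> 'a \<Rightarrow> 'a set" where
  "reach_avoiding E w x = {r. \<exists>W. walk E W \<and> hd W = x \<and> last W = r \<and> w \<notin> set W}"

lemma reach_avoiding_trans: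
  assumes "r \<in> reach_avoiding E w x" "walk E W" "hd W = r" "w \<notin> set W"
  shows "last W \<in> reach_avoiding E w x"
proof -
  obtain W0 where W0: "walk E W0" "hd W0 = x" "last W0 = r" "w \<notin> set W0"
    using assms(1) unfolding reach_avoiding_def by blast
  have "W0 \<noteq> []" "W \<noteq> []"
    using W0(1) assms(2) walk_nonempty by blast+
  moreover have "w \<notin> set (W0 @ tl W)"
    using W0(4) assms(4) set_tl_subset by fastforce
  ultimately show ?thesis
    using walk_join[OF W0(1) assms(2)] last_append_tl[of W0 W] W0 assms(3)
    unfolding reach_avoiding_def by (intro CollectI exI[of _ "W0 @ tl W"]) simp
qed

lemma reach_avoiding_start: "x \<noteq> w \<Longrightarrow> x \<in> reach_avoiding E w x"
  unfolding reach_avoiding_def by (intro CollectI exI[of _ "[x]"]) simp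

lemma reach_avoiding_avoids: "w \<notin> reach_avoiding E w x"
  unfolding reach_avoiding_def using walk_nonempty last_in_set by fastforce

lemma reach_avoiding_step:
  assumes "r \<in> reach_avoiding E w x" "{r, q} \<in> E" "q \<noteq> w"
  shows "q \<in> reach_avoiding E w x"
proof -
  have "r \<noteq> w"
    using assms(1) reach_avoiding_avoids by metis
  then show ?thesis
    using reach_avoiding_trans[OF assms(1), of "[r, q]"] assms(2,3) by simp
qed

lemma reach_avoiding_walk_set:
  assumes "walk E W" "hd W = x" "w \<notin> set W"
  shows "set W \<subseteq> reach_avoiding E w x"
proof
  fix r assume "r \<in> set W"
  then obtain W' where "walk E W'" "hd W' = x" "last W' = r" "set W' \<subseteq> set W"
    using walk_prefix[OF assms(1)] assms(2) by blast
  then show "r \<in> reach_avoiding E w x"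
    unfolding reach_avoiding_def using assms(3) by blast
qed

lemma reach_avoiding_subset:
  assumes "simple_graph V E" "x \<in> V"
  shows "reach_avoiding E w x \<subseteq> V"
proof
  fix r assume "r \<in> reach_avoiding E w x"
  then obtain W where "walk E W" "hd W = x" "last W = r"
    unfolding reach_avoiding_def by blast
  moreover have "set W \<subseteq> V"
    using walk_set_subset[of E W V] simple_graph_edge_subset[OF assms(1)] assms(2) calculation
    by blast
  ultimately show "r \<in> V"
    using walk_nonempty last_in_set by blast
qed

lemma reach_avoiding_edges_split:
  fixes w x :: 'a
  assumes sg: "simple_graph V E"
  defines "R \<equiv> reach_avoiding E w x"
  shows "E = {e \<in> E. e \<subseteq> V - R} \<union> {e \<in> E. e \<subseteq> insert w R}"
proof (intro equalityI subsetI)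
  have step: "b \<in> insert w R" if "{a, b} \<in> E" "a \<in> R" for a b
    using that reach_avoiding_step unfolding R_def by fastforce
  fix e assume e: "e \<in> E"
  then obtain p q where pq: "e = {p, q}" "p \<in> V" "q \<in> V"
    using simple_graph_edgeE[OF sg] by metis
  have qp: "{q, p} \<in> E"
    using e pq by (simp add: insert_commute)
  show "e \<in> {e \<in> E. e \<subseteq> V - R} \<union> {e \<in> E. e \<subseteq> insert w R}"
  proof (cases "p \<in> R \<or> q \<in> R")
    case True
    then have "p \<in> insert w R" "q \<in> insert w R"
      using step[of p q] step[of q p] e qp pq(1) by auto
    then show ?thesis
      using e pq by simp
  next
    case False
    then show ?thesis
      using e pq by simp
  qed
qed auto

lemma graph_connected_reach_avoiding:
  assumes "{w, x} \<in> E" "x \<noteq> w"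
  defines "V2 \<equiv> insert w (reach_avoiding E w x)"
  shows "graph_connected V2 {e \<in> E. e \<subseteq> V2}"
proof (rule graph_connected_from_root[where r = x], intro ballI)
  have x: "x \<in> reach_avoiding E w x"
    using assms(2) by (rule reach_avoiding_start)
  fix u assume u: "u \<in> V2"
  show "\<exists>W. walk {e \<in> E. e \<subseteq> V2} W \<and> hd W = x \<and> last W = u"
  proof (cases "u = w")
    case True
    have "{x, w} \<in> {e \<in> E. e \<subseteq> V2}"
      using assms(1) x unfolding V2_def by (auto simp: insert_commute)
    then show ?thesis
      using True by (intro exI[of _ "[x, w]"]) simp
  next
    case False
    then obtain W where W: "walk E W" "hd W = x" "last W = u" "w \<notin> set W"
      using u unfolding V2_def reach_avoiding_def by blast
    have "set W \<subseteq> V2"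
      using reach_avoiding_walk_set[OF W(1,2,4)] unfolding V2_def by blast
    then show ?thesis
      using walk_restrict[OF W(1)] W(2,3) by blast
  qed
qed

lemma graph_connected_outside_reach_avoiding:
  fixes x :: 'a
  assumes sg: "simple_graph V E" and cn: "graph_connected V E" and w: "w \<in> V"
  defines "V1 \<equiv> V - reach_avoiding E w x"
  shows "graph_connected V1 {e \<in> E. e \<subseteq> V1}"
proof (rule graph_connected_from_root[where r = w], intro ballI)
  fix u assume u: "u \<in> V1"
  show "\<exists>W. walk {e \<in> E. e \<subseteq> V1} W \<and> hd W = w \<and> last W = u"
  proof (cases "u = w")
    case True
    then show ?thesis
      by (intro exI[of _ "[w]"]) simp
  next
    case False
    obtain W where "walk E W" "hd W = u" "last W = w"
      using cn u w unfolding graph_connected_def V1_def by blast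
    then obtain P where P: "walk E P" "distinct P" "hd P = u" "last P = w"
      using walk_to_path[of E W] by metis
    have PV: "set P \<subseteq> V"
      using walk_set_subset[OF P(1)] simple_graph_edge_subset[OF sg] P(3) u
      unfolding V1_def by blast
    define B where "B = butlast P"
    have PB: "P = B @ [w]" "B \<noteq> []"
      using P False walk_nonempty unfolding B_def
      by (metis append_butlast_last_id, metis append_butlast_last_id append_Nil last_snoc list.sel(1))
    have B: "walk E B" "hd B = u" "w \<notin> set B"
      using P PB walk_appendD1 by (metis, metis hd_append2, simp)
    have "p \<notin> reach_avoiding E w x" if p: "p \<in> set B" for p
    proof
      assume pR: "p \<in> reach_avoiding E w x"
      obtain A where A: "walk E A" "hd A = u" "last A = p" "set A \<subseteq> set B"
        using walk_prefix[OF B(1) p] B(2) by blast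
      have "A \<noteq> []"
        using A(1) walk_nonempty by blast
      then have "last (rev A) \<in> reach_avoiding E w x"
        using reach_avoiding_trans[OF pR walk_rev[OF A(1)]] A(3,4) B(3)
        by (auto simp: hd_rev)
      then show False
        using u A(2) \<open>A \<noteq> []\<close> unfolding V1_def by (simp add: last_rev)
    qed
    then have "set P \<subseteq> V1"
      using PV PB reach_avoiding_avoids unfolding V1_def by fastforce
    then have "walk {e \<in> E. e \<subseteq> V1} (rev P)"
      using walk_rev[OF walk_restrict[OF P(1)]] by blast
    then show ?thesis
      using P PB by (intro exI[of _ "rev P"]) (simp add: hd_rev last_rev)
  qed
qed

lemma cut_vertex_split:
  assumes sg: "simple_graph V E" and cn: "graph_connected V E" and wx: "{w, x} \<in> E"
    and y: "y \<in> V" "y \<noteq> w" "y \<notin> reach_avoiding E w x"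
  obtains V1 V2 E1 E2 where "V = V1 \<union> V2" "V1 \<inter> V2 = {w}" "E = E1 \<union> E2" "E1 \<inter> E2 = {}"
    "simple_graph V1 E1" "simple_graph V2 E2" "graph_connected V1 E1" "graph_connected V2 E2"
    "{w, x} \<in> E2" "\<exists>e\<in>E1. w \<in> e"
proof -
  define R where "R = reach_avoiding E w x"
  define V1 V2 where "V1 = V - R" and "V2 = insert w R"
  define E1 E2 where "E1 = {e \<in> E. e \<subseteq> V1}" and "E2 = {e \<in> E. e \<subseteq> V2}"
  have xw: "x \<noteq> w" "x \<in> V" "w \<in> V"
    using simple_graph_edgeD[OF sg wx] by auto
  have R: "R \<subseteq> V" "w \<notin> R" "x \<in> R"
    unfolding R_def using reach_avoiding_subset[OF sg xw(2), of w] reach_avoiding_avoids[of w E x]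
      reach_avoiding_start[OF xw(1), of E] by auto
  have V: "V = V1 \<union> V2" "V1 \<inter> V2 = {w}"
    using R xw unfolding V1_def V2_def by auto
  have E: "E = E1 \<union> E2"
    using reach_avoiding_edges_split[OF sg] unfolding E1_def E2_def V1_def V2_def R_def .
  have "E1 \<inter> E2 = {}"
  proof (rule ccontr)
    assume "E1 \<inter> E2 \<noteq> {}"
    then obtain e where e: "e \<in> E" "e \<subseteq> V1 \<inter> V2"
      unfolding E1_def E2_def by blast
    then obtain p q where "e = {p, q}" "p \<noteq> q"
      using simple_graph_edgeE[OF sg] by metis
    then show False
      using e V(2) by auto
  qed
  moreover have "simple_graph V1 E1" "simple_graph V2 E2"
    unfolding E1_def E2_def using simple_graph_induced[OF sg] by blast+
  moreover have cn1: "graph_connected V1 E1" and "graph_connected V2 E2"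
    unfolding E1_def E2_def V1_def V2_def R_def
    using graph_connected_outside_reach_avoiding[OF sg cn xw(3)]
      graph_connected_reach_avoiding[OF wx xw(1)] by blast+
  moreover have "{w, x} \<in> E2"
    using wx R(3) unfolding E2_def V2_def by auto
  moreover have "\<exists>e\<in>E1. w \<in> e"
  proof -
    have "y \<in> V1" "w \<in> V1"
      using y V unfolding V1_def R_def by auto
    then obtain W where "walk E1 W" "hd W = w" "last W = y"
      using cn1 unfolding graph_connected_def by blast
    then obtain c where "{w, c} \<in> E1"
      using walk_first_edge y(2) by metis
    then show ?thesis
      by blast
  qed
  ultimately show ?thesis
    using that V E by blast
qed

lemma cactus_no_chord:
  assumes ca: "cycles_edge_disjoint E" and C: "is_cycle E C" "w \<in> set C"
    and wx: "{w, x} \<in> E" "{w, x} \<notin> cycle_edges C" and y: "y \<in> set C" "y \<noteq> w"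
  shows "y \<notin> reach_avoiding E w x"
proof
  assume "y \<in> reach_avoiding E w x"
  then obtain Wxy where Wxy: "walk E Wxy" "hd Wxy = x" "last Wxy = y" "w \<notin> set Wxy"
    unfolding reach_avoiding_def by blast
  obtain C' where C': "is_cycle E C'" "cycle_edges C' = cycle_edges C" "set C' = set C" "last C' = w"
    using is_cycle_rotate_to_last[OF C] by metis
  obtain B w' where B: "C' = B @ [w']" "2 \<le> length B" "distinct B" "w' \<notin> set B" "hd B \<noteq> last B"
    "cycle_edges C' = insert {w', hd B} (insert {last B, w'} (walk_edges B))"
    by (rule is_cycle_snoc_decomp[OF C'(1)])
  have "w' = w"
    using B(1) C'(4) by simp
  have "B \<noteq> []" "y \<in> set B"
    using B(1,2) C'(3) y \<open>w' = w\<close> by auto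
  then have "hd B \<in> set B"
    by simp
  then have "w \<noteq> hd B"
    using B(4) \<open>w' = w\<close> by auto
  have "walk E B"
    using walk_appendD1[of E B "[w']"] is_cycle_walk[OF C'(1)] B(1) \<open>B \<noteq> []\<close> by simp
  then obtain A where A: "walk E A" "hd A = hd B" "last A = y" "set A \<subseteq> set B"
    using walk_prefix[OF \<open>walk E B\<close> \<open>y \<in> set B\<close>] by blast
  have ne: "A \<noteq> []" "rev Wxy \<noteq> []"
    using A(1) Wxy(1) walk_nonempty by auto
  define W0 where "W0 = A @ tl (rev Wxy)"
  have W0: "walk E W0" "hd W0 = hd B" "last W0 = x" "w \<notin> set W0" "W0 \<noteq> []"
    unfolding W0_def using walk_join[OF A(1) walk_rev[OF Wxy(1)]] last_append_tl[OF ne] A Wxy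
      B(4) \<open>w' = w\<close> ne
    by (auto simp: hd_rev last_rev dest: set_tl_subset[THEN subsetD])
  have CE: "cycle_edges C' = insert {w, hd B} (insert {last B, w} (walk_edges B))"
    using B(6) \<open>w' = w\<close> by simp
  have "x \<noteq> hd B"
    using wx(2) CE C'(2) by auto
  have e: "{w, hd B} \<in> E" "{w, hd B} \<in> cycle_edges C'"
    using C'(1) CE unfolding is_cycle_def by auto
  have W: "walk E (W0 @ [w])" "walk_edges (W0 @ [w]) = insert {x, w} (walk_edges W0)"
    using W0 wx(1) walk_append[of W0 "[w]" E] walk_edges_snoc[of W0 w]
    by (auto simp: insert_commute)
  have "{w, hd B} \<notin> walk_edges W0"
    using W0(4) walk_edges_subset by blast
  then have notin: "{w, hd B} \<notin> walk_edges (W0 @ [w])"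
    using W(2) \<open>x \<noteq> hd B\<close> by (auto simp: doubleton_eq_iff)
  have hdW: "hd (W0 @ [w]) = hd B" and lastW: "last (W0 @ [w]) = w"
    using W0 by simp_all
  obtain P where P: "is_cycle E P" "{w, hd B} \<in> cycle_edges P"
    "cycle_edges P \<subseteq> insert {w, hd B} (walk_edges (W0 @ [w]))"
    by (rule cycle_through_edge[OF W(1) hdW lastW \<open>w \<noteq> hd B\<close> e(1) notin])
  have "w \<in> set P"
    using P(2) cycle_edges_subset by blast
  moreover have "{f \<in> cycle_edges P. w \<in> f} \<subseteq> {{w, hd B}, {x, w}}"
  proof
    fix f assume f: "f \<in> {f \<in> cycle_edges P. w \<in> f}"
    have "f \<notin> walk_edges W0"
      using f W0(4) walk_edges_subset by blast
    then show "f \<in> {{w, hd B}, {x, w}}"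
      using f P(3) W(2) by auto
  qed
  ultimately have "{f \<in> cycle_edges P. w \<in> f} = {{w, hd B}, {x, w}}"
    by (rule cycle_edges_at_eq_pair[OF P(1)])
  then have "{x, w} \<in> {f \<in> cycle_edges P. w \<in> f}"
    by simp
  then have "{x, w} \<in> cycle_edges P"
    by simp
  moreover have "cycle_edges P = cycle_edges C'"
    using ca e P(1,2) C'(1) unfolding cycles_edge_disjoint_def by blast
  ultimately show False
    using wx(2) C'(2) by (simp add: insert_commute)
qed

lemma is_cycle_vertices_subset:
  assumes sg: "simple_graph V E" and P: "is_cycle E P"
  shows "set P \<subseteq> V"
proof
  fix x assume "x \<in> set P"
  then obtain e where e: "e \<in> cycle_edges P" "x \<in> e"
    using is_cycle_vertex_in_edge[OF P] by blast
  then have "e \<in> E"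
    using P unfolding is_cycle_def by blast
  then show "x \<in> V"
    using simple_graph_edge_subset[OF sg] e(2) by blast
qed

lemma edge_leaving_cycle:
  assumes sg: "simple_graph V E" and cn: "graph_connected V E" and P: "is_cycle E P"
    and h: "h \<in> E" "h \<notin> cycle_edges P"
  obtains w x where "{w, x} \<in> E" "{w, x} \<notin> cycle_edges P" "w \<in> set P"
proof -
  obtain p q where pq: "h = {p, q}" "p \<in> V"
    using simple_graph_edgeE[OF sg h(1)] by metis
  consider "p \<in> set P" | "q \<in> set P" | "p \<notin> set P" "q \<notin> set P"
    by blast
  then show ?thesis
  proof cases
    case 1
    then show ?thesis
      using that h pq(1) by blast
  next
    case 2
    then show ?thesis
      using that[of q p] h pq(1) by (simp add: insert_commute)
  next
    case 3
    have "P \<noteq> []"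
      using P unfolding is_cycle_def by auto
    then have "hd P \<in> set P" "hd P \<in> V"
      using is_cycle_vertices_subset[OF sg P] by auto
    then obtain W where W: "walk E W" "hd W = p" "last W = hd P"
      using cn pq(2) unfolding graph_connected_def by blast
    have "\<exists>a b. {a, b} \<in> E \<and> a \<notin> set P \<and> b \<in> set P"
      using walk_crossing_edge[of E W "set P"] W 3(1) \<open>hd P \<in> set P\<close> by simp
    then obtain a b where ab: "{a, b} \<in> E" "a \<notin> set P" "b \<in> set P"
      by blast
    then have "{b, a} \<notin> cycle_edges P"
      using cycle_edges_subset by blast
    then show ?thesis
      using that[of b a] ab by (simp add: insert_commute)
  qed
qed

lemma block_is_cycle:
  assumes sg: "simple_graph V E" and cn: "graph_connected V E" and ca: "cycles_edge_disjoint E"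
    and fin: "finite V" and V3: "3 \<le> card V"
    and no_cut: "\<And>w x y. {w, x} \<in> E \<Longrightarrow> y \<in> V \<Longrightarrow> y \<noteq> w \<Longrightarrow> y \<in> reach_avoiding E w x"
  obtains vs where "is_cycle E vs" "E = cycle_edges vs" "set vs = V"
proof -
  have "\<not> card V \<le> Suc 0"
    using V3 by simp
  then obtain a b where ab: "a \<in> V" "b \<in> V" "a \<noteq> b"
    using card_le_Suc0_iff_eq[OF fin] by blast
  then obtain W where "walk E W" "hd W = a" "last W = b"
    using cn unfolding graph_connected_def by blast
  then obtain v where uv: "{a, v} \<in> E"
    using walk_first_edge ab(3) by metis
  define u where "u = a"
  have uv': "u \<noteq> v" "{v, u} \<in> E"
    using simple_graph_edgeD[OF sg uv] uv unfolding u_def by (auto simp: insert_commute)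
  have "card V - card {u, v} \<le> card (V - {u, v})"
    by (rule diff_card_le_card_Diff) simp
  then have "card (V - {u, v}) \<ge> 1"
    using V3 uv'(1) by simp
  then have "V - {u, v} \<noteq> {}"
    by (metis card.empty not_one_le_zero)
  then obtain z where z: "z \<in> V" "z \<noteq> u" "z \<noteq> v"
    by blast
  obtain W1 where W1: "walk E W1" "hd W1 = v" "last W1 = z" "u \<notin> set W1"
    using no_cut[OF uv[folded u_def] z(1,2)] unfolding reach_avoiding_def by blast
  obtain W2 where W2: "walk E W2" "hd W2 = u" "last W2 = z" "v \<notin> set W2"
    using no_cut[OF uv'(2) z(1,3)] unfolding reach_avoiding_def by blast
  have ne: "W1 \<noteq> []" "rev W2 \<noteq> []"
    using W1(1) W2(1) walk_nonempty by auto
  define W where "W = W1 @ tl (rev W2)"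
  have W: "walk E W" "hd W = v" "last W = u"
    unfolding W_def using walk_join[OF W1(1) walk_rev[OF W2(1)]] last_append_tl[OF ne] W1 W2 ne
    by (simp_all add: hd_rev last_rev)
  have "walk_edges W = walk_edges W1 \<union> walk_edges W2"
    unfolding W_def using walk_edges_join[OF ne] W1 W2 by (simp add: hd_rev)
  then have "{u, v} \<notin> walk_edges W"
    using W1(4) W2(4) walk_edges_subset by blast
  then obtain P where P: "is_cycle E P" "{u, v} \<in> cycle_edges P"
    by (rule cycle_through_edge[OF W uv'(1) uv[folded u_def]])
  have EP: "E \<subseteq> cycle_edges P"
  proof
    fix h assume h: "h \<in> E"
    show "h \<in> cycle_edges P"
    proof (rule ccontr)
      assume "h \<notin> cycle_edges P"
      then obtain w x where wx: "{w, x} \<in> E" "{w, x} \<notin> cycle_edges P" "w \<in> set P"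
        using edge_leaving_cycle[OF sg cn P(1) h] by metis
      have "P \<noteq> []" "hd P \<noteq> last P"
        using P(1) distinct_hd_neq_last[of P] unfolding is_cycle_def by auto
      then have "\<exists>y\<in>set P. y \<noteq> w"
        by (metis hd_in_set last_in_set)
      then obtain y where y: "y \<in> set P" "y \<noteq> w"
        by blast
      have "y \<in> V"
        using y(1) is_cycle_vertices_subset[OF sg P(1)] by blast
      then show False
        using cactus_no_chord[OF ca P(1) wx(3,1,2) y] no_cut[OF wx(1)] y(2) by blast
    qed
  qed
  have "V \<subseteq> set P"
  proof
    fix x assume x: "x \<in> V"
    show "x \<in> set P"
    proof (rule ccontr)
      assume xP: "x \<notin> set P"
      have "P \<noteq> []"
        using P(1) unfolding is_cycle_def by auto
      then have "hd P \<in> set P" "hd P \<in> V"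
        using is_cycle_vertices_subset[OF sg P(1)] by auto
      then obtain Wx where "walk E Wx" "hd Wx = x" "last Wx = hd P" "x \<noteq> hd P"
        using cn x xP unfolding graph_connected_def by blast
      then obtain c where "{x, c} \<in> E"
        using walk_first_edge by metis
      then show False
        using EP xP cycle_edges_subset by blast
    qed
  qed
  then show ?thesis
    using that P(1) EP is_cycle_vertices_subset[OF sg P(1)] unfolding is_cycle_def by blast
qed

definition leaf_bound :: "'a set \<Rightarrow> nat \<Rightarrow> ('a \<Rightarrow> nat) \<Rightarrow> 'a \<Rightarrow> bool" where
  "leaf_bound V m g z \<longleftrightarrow> 3 * m + 4 + card {v \<in> V. v \<noteq> z \<and> g v = 1} \<le> 4 * card V"

definition odd_degree_bound :: "'a set \<Rightarrow> nat \<Rightarrow> ('a \<Rightarrow> nat) \<Rightarrow> bool" where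
  "odd_degree_bound V m g \<longleftrightarrow> 6 * m + card {v \<in> V. odd (g v)} + 8 \<le> 8 * card V"

lemma card_Un_one_common: "finite A \<Longrightarrow> finite B \<Longrightarrow> A \<inter> B = {w} \<Longrightarrow> card (A \<union> B) + 1 = card A + card B"
  using card_Un_Int[of A B] by simp

lemma card_le_of_subset_Un:
  "finite A \<Longrightarrow> finite B \<Longrightarrow> S \<subseteq> A \<union> B \<Longrightarrow> card S \<le> card A + card B"
  using card_mono[of "A \<union> B" S] card_Un_le[of A B] by simp

lemma leaf_bound_glue:
  assumes fin: "finite V1" "finite V2" and V12: "V1 \<inter> V2 = {w}"
    and g1: "\<forall>v. v \<notin> V1 \<longrightarrow> g1 v = 0" and g2: "\<forall>v. v \<notin> V2 \<longrightarrow> g2 v = 0"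
    and w: "1 \<le> g1 w" "1 \<le> g2 w"
    and B1: "\<forall>z\<in>V1. leaf_bound V1 m1 g1 z" and B2: "\<forall>z\<in>V2. leaf_bound V2 m2 g2 z"
    and z: "z \<in> V1 \<union> V2"
  shows "leaf_bound (V1 \<union> V2) (m1 + m2) (\<lambda>v. g1 v + g2 v) z"
proof -
  have wV: "w \<in> V1" "w \<in> V2"
    using V12 by auto
  obtain z1 z2 where zz: "z1 \<in> V1" "z2 \<in> V2" "{z1, z2} = {z, w}"
  proof (cases "z \<in> V1")
    case True
    then show ?thesis
      using that[of z w] wV by simp
  next
    case False
    then show ?thesis
      using that[of w z] wV z by (simp add: insert_commute)
  qed
  have "{v \<in> V1 \<union> V2. v \<noteq> z \<and> g1 v + g2 v = 1} \<subseteq>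
      {v \<in> V1. v \<noteq> z1 \<and> g1 v = 1} \<union> {v \<in> V2. v \<noteq> z2 \<and> g2 v = 1}"
  proof
    fix v assume v: "v \<in> {v \<in> V1 \<union> V2. v \<noteq> z \<and> g1 v + g2 v = 1}"
    then have "v \<noteq> w"
      using w by auto
    moreover have "v \<noteq> z"
      using v by simp
    ultimately have "v \<notin> {z1, z2}" "v \<in> V1 \<longleftrightarrow> v \<notin> V2"
      using v zz(3) V12 by auto
    then show "v \<in> {v \<in> V1. v \<noteq> z1 \<and> g1 v = 1} \<union> {v \<in> V2. v \<noteq> z2 \<and> g2 v = 1}"
      using v g1 g2 by auto
  qed
  then have "card {v \<in> V1 \<union> V2. v \<noteq> z \<and> g1 v + g2 v = 1} \<le>
      card {v \<in> V1. v \<noteq> z1 \<and> g1 v = 1} + card {v \<in> V2. v \<noteq> z2 \<and> g2 v = 1}"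
    using fin by (intro card_le_of_subset_Un) simp_all
  moreover have "leaf_bound V1 m1 g1 z1" "leaf_bound V2 m2 g2 z2"
    using B1 B2 zz(1,2) by simp_all
  ultimately show ?thesis
    using card_Un_one_common[OF fin V12] unfolding leaf_bound_def distrib_left by linarith
qed

lemma odd_degree_bound_glue:
  assumes fin: "finite V1" "finite V2" and V12: "V1 \<inter> V2 = {w}"
    and g1: "\<forall>v. v \<notin> V1 \<longrightarrow> g1 v = 0" and g2: "\<forall>v. v \<notin> V2 \<longrightarrow> g2 v = 0"
    and B1: "odd_degree_bound V1 m1 g1" and B2: "odd_degree_bound V2 m2 g2"
  shows "odd_degree_bound (V1 \<union> V2) (m1 + m2) (\<lambda>v. g1 v + g2 v)"
proof -
  have "{v \<in> V1 \<union> V2. odd (g1 v + g2 v)} \<subseteq> {v \<in> V1. odd (g1 v)} \<union> {v \<in> V2. odd (g2 v)}"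
  proof
    fix v assume v: "v \<in> {v \<in> V1 \<union> V2. odd (g1 v + g2 v)}"
    then have "odd (g1 v) \<or> odd (g2 v)"
      by auto
    moreover have "odd (g1 v) \<Longrightarrow> v \<in> V1" "odd (g2 v) \<Longrightarrow> v \<in> V2"
      using g1 g2 by force+
    ultimately show "v \<in> {v \<in> V1. odd (g1 v)} \<union> {v \<in> V2. odd (g2 v)}"
      by blast
  qed
  then have "card {v \<in> V1 \<union> V2. odd (g1 v + g2 v)} \<le>
      card {v \<in> V1. odd (g1 v)} + card {v \<in> V2. odd (g2 v)}"
    using fin by (intro card_le_of_subset_Un) simp_all
  then show ?thesis
    using B1 B2 card_Un_one_common[OF fin V12] unfolding odd_degree_bound_def distrib_left by linarith
qed

lemma block_bounds:
  fixes V :: "nat set"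
  assumes bc: "bicactus V E"
    and no_cut: "\<And>w x y. {w, x} \<in> E \<Longrightarrow> y \<in> V \<Longrightarrow> y \<noteq> w \<Longrightarrow> y \<in> reach_avoiding E w x"
  shows "(\<forall>z\<in>V. leaf_bound V (card E) (gdeg E) z) \<and> odd_degree_bound V (card E) (gdeg E)"
proof -
  have fin: "finite V" and sg: "simple_graph V E" and cn: "graph_connected V E"
    and ca: "cycles_edge_disjoint E" and bi: "bipartite E" and "V \<noteq> {}"
    using bc unfolding bicactus_def by auto
  then have "1 \<le> card V"
    by (simp add: Suc_le_eq card_gt_0_iff)
  then have "card V = 1 \<or> card V = 2 \<or> 3 \<le> card V"
    by linarith
  then consider "card V = 1" | "card V = 2" | "3 \<le> card V"
    by blast
  then show ?thesis
  proof cases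
    case 1
    then obtain a where "V = {a}"
      using card_1_singletonE by blast
    have "E = {}"
    proof (rule ccontr)
      assume "E \<noteq> {}"
      then obtain e where "e \<in> E"
        by blast
      then obtain u v where "u \<noteq> v" "u \<in> V" "v \<in> V"
        by (rule simple_graph_edgeE[OF sg])
      then show False
        using \<open>V = {a}\<close> by simp
    qed
    then show ?thesis
      using 1 unfolding leaf_bound_def odd_degree_bound_def gdeg_def by simp
  next
    case 2
    then obtain a b where V: "V = {a, b}" "a \<noteq> b"
      by (meson card_2_iff)
    then obtain W where "walk E W" "hd W = a" "last W = b"
      using cn unfolding graph_connected_def by blast
    then obtain c where "{a, c} \<in> E"
      using walk_first_edge V(2) by metis
    moreover have "E \<subseteq> {{a, b}}"
    proof
      fix e assume "e \<in> E"
      then obtain u v where "e = {u, v}" "u \<noteq> v" "u \<in> V" "v \<in> V"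
        by (rule simple_graph_edgeE[OF sg])
      then show "e \<in> {{a, b}}"
        using V by (auto simp: doubleton_eq_iff)
    qed
    ultimately have "E = {{a, b}}"
      by auto
    moreover have "card {v \<in> V. v \<noteq> z \<and> gdeg E v = 1} \<le> 1" if "z \<in> V" for z
      using card_mono[of "V - {z}" "{v \<in> V. v \<noteq> z \<and> gdeg E v = 1}"] fin 2 that by auto
    moreover have "card {v \<in> V. odd (gdeg E v)} \<le> 2"
      using card_mono[of V "{v \<in> V. odd (gdeg E v)}"] fin 2 by auto
    ultimately show ?thesis
      using 2 unfolding leaf_bound_def odd_degree_bound_def by auto
  next
    case 3
    obtain vs where vs: "is_cycle E vs" "E = cycle_edges vs" "set vs = V"
      using block_is_cycle[OF sg cn ca fin 3 no_cut] by blast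
    have cards: "card E = length vs" "card V = length vs"
      using card_cycle_edges[OF vs(1)] vs distinct_card unfolding is_cycle_def by auto
    have "gdeg E v = 2" if "v \<in> V" for v
      using card_cycle_edges_at[OF vs(1)] vs(2,3) that unfolding gdeg_def by simp
    then have empty: "{v \<in> V. v \<noteq> z \<and> gdeg E v = 1} = {}" "{v \<in> V. odd (gdeg E v)} = {}" for z
      by auto
    obtain A where "\<forall>e\<in>E. card (e \<inter> A) = 1"
      using bi unfolding bipartite_def by blast
    then have "even (length vs)" "3 \<le> length vs"
      using is_cycle_even_length[OF vs(1)] vs(1) unfolding is_cycle_def by blast+
    then have "4 \<le> length vs"
      by presburger
    then show ?thesis
      unfolding leaf_bound_def odd_degree_bound_def cards empty card.empty by simp
  qed
qed

lemma bicactus_part: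
  assumes "bicactus V E" "V' \<subseteq> V" "w \<in> V'" "E' \<subseteq> E" "simple_graph V' E'" "graph_connected V' E'"
  shows "bicactus V' E'"
proof -
  have "finite V" "cycles_edge_disjoint E" "bipartite E"
    using assms(1) unfolding bicactus_def by auto
  then show ?thesis
    unfolding bicactus_def using assms(2-6) finite_subset[of V' V] cycles_edge_disjoint_mono[of E E']
      bipartite_mono[of E E'] by auto
qed

lemma bicactus_bounds:
  fixes V :: "nat set"
  assumes "bicactus V E"
  shows "(\<forall>z\<in>V. leaf_bound V (card E) (gdeg E) z) \<and> odd_degree_bound V (card E) (gdeg E)"
  using assms
proof (induction "card E" arbitrary: V E rule: less_induct)
  case less
  have fin: "finite V" and sg: "simple_graph V E" and cn: "graph_connected V E"
    using less.prems unfolding bicactus_def by auto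
  show ?case
  proof (cases "\<exists>w x y. {w, x} \<in> E \<and> y \<in> V \<and> y \<noteq> w \<and> y \<notin> reach_avoiding E w x")
    case True
    then obtain w x y where wx: "{w, x} \<in> E" and y: "y \<in> V" "y \<noteq> w" "y \<notin> reach_avoiding E w x"
      by blast
    obtain V1 V2 E1 E2 where S: "V = V1 \<union> V2" "V1 \<inter> V2 = {w}" "E = E1 \<union> E2" "E1 \<inter> E2 = {}"
      "simple_graph V1 E1" "simple_graph V2 E2" "graph_connected V1 E1" "graph_connected V2 E2"
      "{w, x} \<in> E2" "\<exists>e\<in>E1. w \<in> e"
      by (rule cut_vertex_split[OF sg cn wx y])
    have finE: "finite E" "finite E1" "finite E2"
      using simple_graph_finite[OF fin sg] S(3) by auto
    obtain e where e: "e \<in> E1" "w \<in> e"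
      using S(10) by blast
    have sub: "E1 \<subseteq> E" "E2 \<subseteq> E"
      using S(3) by auto
    moreover have "{w, x} \<notin> E1" "e \<notin> E2"
      using S(4,9) e(1) by auto
    ultimately have "E1 \<subset> E" "E2 \<subset> E"
      using S(9) e(1) by auto
    then have card: "card E1 < card E" "card E2 < card E"
      using finE(1) by (simp_all add: psubset_card_mono)
    have "V1 \<subseteq> V" "V2 \<subseteq> V" "w \<in> V1" "w \<in> V2"
      using S(1,2) by auto
    then have "bicactus V1 E1" "bicactus V2 E2"
      using bicactus_part[OF less.prems _ _ sub(1) S(5,7)] bicactus_part[OF less.prems _ _ sub(2) S(6,8)]
      by simp_all
    then have IH: "(\<forall>z\<in>V1. leaf_bound V1 (card E1) (gdeg E1) z) \<and> odd_degree_bound V1 (card E1) (gdeg E1)"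
      "(\<forall>z\<in>V2. leaf_bound V2 (card E2) (gdeg E2) z) \<and> odd_degree_bound V2 (card E2) (gdeg E2)"
      using less(1)[OF card(1)] less(1)[OF card(2)] by simp_all
    have fin12: "finite V1" "finite V2"
      using fin S(1) by auto
    have deg: "gdeg E = (\<lambda>v. gdeg E1 v + gdeg E2 v)"
      using gdeg_Un[OF finE(2,3) S(4)] S(3) by auto
    have zero: "\<forall>v. v \<notin> V1 \<longrightarrow> gdeg E1 v = 0" "\<forall>v. v \<notin> V2 \<longrightarrow> gdeg E2 v = 0"
      using gdeg_eq_0[OF S(5)] gdeg_eq_0[OF S(6)] by auto
    have pos: "1 \<le> gdeg E1 w" "1 \<le> gdeg E2 w"
      using gdeg_pos[OF finE(2) e] gdeg_pos[OF finE(3) S(9)] by simp_all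
    have "card E = card E1 + card E2"
      using card_Un_disjoint[OF finE(2,3) S(4)] S(3) by simp
    then show ?thesis
      unfolding deg S(1)
      using leaf_bound_glue[OF fin12 S(2) zero pos] odd_degree_bound_glue[OF fin12 S(2) zero] IH
      by simp
  next
    case False
    then show ?thesis
      using block_bounds[OF less.prems] by blast
  qed
qed

lemma card_doubleton_Int_eq_1: "a \<noteq> b \<Longrightarrow> card ({a, b} \<inter> A) = 1 \<longleftrightarrow> (a \<in> A \<longleftrightarrow> b \<notin> A)"
  by (cases "a \<in> A"; cases "b \<in> A") auto

lemma bipartite_iff_two_colouring:
  assumes sg: "simple_graph V E"
  shows "bipartite E \<longleftrightarrow> (\<exists>A. \<forall>a b. {a, b} \<in> E \<longrightarrow> (a \<in> A \<longleftrightarrow> b \<notin> A))"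
proof
  assume "bipartite E"
  then obtain A where A: "\<forall>e\<in>E. card (e \<inter> A) = 1"
    unfolding bipartite_def by blast
  have "a \<in> A \<longleftrightarrow> b \<notin> A" if "{a, b} \<in> E" for a b
    using A that card_doubleton_Int_eq_1[OF simple_graph_edgeD(1)[OF sg that]] by blast
  then show "\<exists>A. \<forall>a b. {a, b} \<in> E \<longrightarrow> (a \<in> A \<longleftrightarrow> b \<notin> A)"
    by blast
next
  assume "\<exists>A. \<forall>a b. {a, b} \<in> E \<longrightarrow> (a \<in> A \<longleftrightarrow> b \<notin> A)"
  then obtain A where A: "\<forall>a b. {a, b} \<in> E \<longrightarrow> (a \<in> A \<longleftrightarrow> b \<notin> A)"
    by blast
  have "card (e \<inter> A) = 1" if "e \<in> E" for e
  proof -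
    obtain a b where "e = {a, b}" "a \<noteq> b"
      using simple_graph_edgeE[OF sg \<open>e \<in> E\<close>] by metis
    then show ?thesis
      using A that card_doubleton_Int_eq_1 by metis
  qed
  then show "bipartite E"
    unfolding bipartite_def by blast
qed

lemma simple_graph_Un:
  assumes "simple_graph V1 E1" "simple_graph V2 E2"
  shows "simple_graph (V1 \<union> V2) (E1 \<union> E2)"
  unfolding simple_graph_def
proof
  fix e assume "e \<in> E1 \<union> E2"
  then obtain u v where "e = {u, v}" "u \<noteq> v" "u \<in> V1 \<union> V2" "v \<in> V1 \<union> V2"
    using simple_graph_edgeE[OF assms(1)] simple_graph_edgeE[OF assms(2)] by (metis UnE UnI1 UnI2)
  then show "\<exists>u v. e = {u, v} \<and> u \<noteq> v \<and> u \<in> V1 \<union> V2 \<and> v \<in> V1 \<union> V2"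
    by blast
qed

lemma edges_disjoint_if_one_common_vertex:
  assumes "simple_graph V1 E1" "simple_graph V2 E2" "V1 \<inter> V2 = {v}"
  shows "E1 \<inter> E2 = {}"
proof (rule ccontr)
  assume "E1 \<inter> E2 \<noteq> {}"
  then obtain e where e: "e \<in> E1" "e \<in> E2"
    by blast
  then obtain a b where "e = {a, b}" "a \<noteq> b"
    using simple_graph_edgeE[OF assms(1)] by metis
  moreover have "e \<subseteq> {v}"
    using e simple_graph_edge_subset[OF assms(1)] simple_graph_edge_subset[OF assms(2)] assms(3)
    by blast
  ultimately show False
    by simp
qed

lemma glued_edge_side:
  assumes "simple_graph V2 E2" "V1 \<inter> V2 = {v}" "e \<in> E1 \<union> E2" "x \<in> e" "x \<in> V1" "x \<noteq> v"
  shows "e \<in> E1"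
  using assms simple_graph_edge_subset by blast

lemma glued_walk_side:
  assumes sg: "simple_graph V1 E1" "simple_graph V2 E2" and V12: "V1 \<inter> V2 = {v}"
    and W: "walk (E1 \<union> E2) xs" "v \<notin> set xs" "hd xs \<in> V1"
  shows "walk E1 xs \<and> set xs \<subseteq> V1"
  using W
proof (induction xs rule: induct_list012)
  case (3 x y zs)
  then have "x \<noteq> v" "x \<in> V1" "{x, y} \<in> E1 \<union> E2"
    by auto
  then have "{x, y} \<in> E1"
    using glued_edge_side[OF sg(2) V12] by blast
  then have "y \<in> V1"
    using simple_graph_edgeD[OF sg(1)] by blast
  then show ?case
    using 3 \<open>{x, y} \<in> E1\<close> by simp
qed simp_all

lemma glued_closed_walk_side:
  assumes sg: "simple_graph V1 E1" "simple_graph V2 E2" and V12: "V1 \<inter> V2 = {v}"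
    and B: "walk (E1 \<union> E2) B" "v \<notin> set B" "hd B \<in> V1"
    and u: "{u, hd B} \<in> E1 \<union> E2" "{last B, u} \<in> E1 \<union> E2"
  shows "insert {u, hd B} (insert {last B, u} (walk_edges B)) \<subseteq> E1"
proof -
  have B1: "walk E1 B" "set B \<subseteq> V1" "B \<noteq> []"
    using glued_walk_side[OF sg V12 B] walk_nonempty by blast+
  then have "hd B \<in> set B" "last B \<in> set B"
    by simp_all
  then have "{u, hd B} \<in> E1" "{last B, u} \<in> E1"
    using glued_edge_side[OF sg(2) V12] u B(2) B1(2) by blast+
  then show ?thesis
    using B1(1) walk_iff_walk_edges by blast
qed

lemma distinct_last_notin_butlast:
  assumes "distinct xs"
  shows "last xs \<notin> set (butlast xs)"
proof (cases "xs = []")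
  case False
  then have "distinct (butlast xs @ [last xs])"
    using assms by simp
  then show ?thesis
    by simp
qed simp

lemma glued_cycle_side:
  assumes sg: "simple_graph V1 E1" "simple_graph V2 E2" and V12: "V1 \<inter> V2 = {v}"
    and P: "is_cycle (E1 \<union> E2) P"
  shows "cycle_edges P \<subseteq> E1 \<or> cycle_edges P \<subseteq> E2"
proof -
  obtain P' where P': "is_cycle (E1 \<union> E2) P'" "cycle_edges P' = cycle_edges P" "v \<notin> set (butlast P')"
  proof (cases "v \<in> set P")
    case True
    then obtain P' where P': "is_cycle (E1 \<union> E2) P'" "cycle_edges P' = cycle_edges P" "last P' = v"
      using is_cycle_rotate_to_last[OF P] by metis
    then have "v \<notin> set (butlast P')"
      using distinct_last_notin_butlast[of P'] unfolding is_cycle_def by blast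
    then show ?thesis
      using that P' by blast
  next
    case False
    then have "v \<notin> set (butlast P)"
      using in_set_butlastD by metis
    then show ?thesis
      using that[OF P refl] by blast
  qed
  obtain B u where B: "P' = B @ [u]" "2 \<le> length B" "distinct B" "u \<notin> set B" "hd B \<noteq> last B"
    "cycle_edges P' = insert {u, hd B} (insert {last B, u} (walk_edges B))"
    by (rule is_cycle_snoc_decomp[OF P'(1)])
  have vB: "v \<notin> set B"
    using P'(3) B(1) by simp
  have "B \<noteq> []"
    using B(2) by auto
  then have W: "walk (E1 \<union> E2) B"
    using walk_appendD1[of _ B "[u]"] is_cycle_walk[OF P'(1)] B(1) by simp
  have u: "{u, hd B} \<in> E1 \<union> E2" "{last B, u} \<in> E1 \<union> E2"
    using P'(1) B(6) unfolding is_cycle_def by auto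
  have "hd B \<in> V1 \<union> V2"
    using simple_graph_edgeD(3)[OF simple_graph_Un[OF sg] u(1)] .
  then consider "hd B \<in> V1" | "hd B \<in> V2"
    by blast
  then show ?thesis
  proof cases
    case 1
    then show ?thesis
      using glued_closed_walk_side[OF sg V12 W vB 1 u] B(6) P'(2) by simp
  next
    case 2
    have swap: "V2 \<inter> V1 = {v}" "walk (E2 \<union> E1) B" "{u, hd B} \<in> E2 \<union> E1" "{last B, u} \<in> E2 \<union> E1"
      using V12 W u by (simp_all add: Int_commute Un_commute)
    show ?thesis
      using glued_closed_walk_side[OF sg(2,1) swap(1,2) vB 2 swap(3,4)] B(6) P'(2) by simp
  qed
qed

lemma graph_connected_glue:
  assumes "graph_connected V1 E1" "graph_connected V2 E2" "v \<in> V1" "v \<in> V2"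
  shows "graph_connected (V1 \<union> V2) (E1 \<union> E2)"
proof (rule graph_connected_from_root[where r = v], intro ballI)
  fix u assume "u \<in> V1 \<union> V2"
  then obtain W where "walk E1 W \<or> walk E2 W" "hd W = v" "last W = u"
    using assms unfolding graph_connected_def by blast
  then show "\<exists>W. walk (E1 \<union> E2) W \<and> hd W = v \<and> last W = u"
    using walk_mono[of _ W "E1 \<union> E2"] by blast
qed

lemma cycles_edge_disjoint_glue:
  assumes sg: "simple_graph V1 E1" "simple_graph V2 E2" and V12: "V1 \<inter> V2 = {v}"
    and ca: "cycles_edge_disjoint E1" "cycles_edge_disjoint E2"
  shows "cycles_edge_disjoint (E1 \<union> E2)"
  unfolding cycles_edge_disjoint_def
proof (intro ballI allI impI)
  fix e C1 C2
  assume C: "is_cycle (E1 \<union> E2) C1 \<and> is_cycle (E1 \<union> E2) C2 \<and> e \<in> cycle_edges C1 \<and> e \<in> cycle_edges C2"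
  have dis: "E1 \<inter> E2 = {}"
    by (rule edges_disjoint_if_one_common_vertex[OF sg V12])
  have "(cycle_edges C1 \<subseteq> E1 \<and> cycle_edges C2 \<subseteq> E1) \<or> (cycle_edges C1 \<subseteq> E2 \<and> cycle_edges C2 \<subseteq> E2)"
    using glued_cycle_side[OF sg V12] C dis by blast
  then show "cycle_edges C1 = cycle_edges C2"
    using C ca unfolding cycles_edge_disjoint_def is_cycle_def by blast
qed

lemma bipartite_glue:
  assumes sg: "simple_graph V1 E1" "simple_graph V2 E2" and V12: "V1 \<inter> V2 = {v}"
    and bi: "bipartite E1" "bipartite E2"
  shows "bipartite (E1 \<union> E2)"
proof -
  obtain A1 A2 where A1: "\<forall>a b. {a, b} \<in> E1 \<longrightarrow> (a \<in> A1 \<longleftrightarrow> b \<notin> A1)"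
    and A2: "\<forall>a b. {a, b} \<in> E2 \<longrightarrow> (a \<in> A2 \<longleftrightarrow> b \<notin> A2)"
    using bi bipartite_iff_two_colouring[OF sg(1)] bipartite_iff_two_colouring[OF sg(2)] by blast
  define A where "A = {x. if x \<in> V1 then x \<in> A1 else (x \<in> A2 \<longleftrightarrow> (v \<in> A2 \<longleftrightarrow> v \<in> A1))}"
  have A_V2: "x \<in> A \<longleftrightarrow> (x \<in> A2 \<longleftrightarrow> (v \<in> A2 \<longleftrightarrow> v \<in> A1))" if "x \<in> V2" for x
    using that V12 unfolding A_def by auto
  have "a \<in> A \<longleftrightarrow> b \<notin> A" if "{a, b} \<in> E1 \<union> E2" for a b
  proof (cases "{a, b} \<in> E1")
    case True
    then show ?thesis
      using A1 simple_graph_edgeD[OF sg(1) True] unfolding A_def by auto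
  next
    case False
    then have "{a, b} \<in> E2"
      using that by blast
    then show ?thesis
      using A2 A_V2 simple_graph_edgeD[OF sg(2)] by blast
  qed
  then show ?thesis
    using bipartite_iff_two_colouring[OF simple_graph_Un[OF sg]] by blast
qed

lemma bicactus_glue:
  assumes "bicactus V1 E1" "bicactus V2 E2" "V1 \<inter> V2 = {v}"
  shows "bicactus (V1 \<union> V2) (E1 \<union> E2)"
  using assms simple_graph_Un graph_connected_glue[of V1 E1 V2 E2 v] cycles_edge_disjoint_glue
    bipartite_glue unfolding bicactus_def by auto

lemma image_image_edges:
  assumes "\<forall>e\<in>E. e \<subseteq> V" "\<forall>x\<in>V. g (f x) = x"
  shows "(`) g ` (`) f ` E = E"
proof -
  have "g ` f ` e = e" if "e \<in> E" for e
  proof -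
    have "g ` f ` e = (\<lambda>x. g (f x)) ` e"
      by (simp add: image_image)
    also have "\<dots> = id ` e"
      using assms that by (intro image_cong) auto
    finally show ?thesis
      by simp
  qed
  then have "(`) g ` (`) f ` E = id ` E"
    unfolding image_image by (intro image_cong) auto
  then show ?thesis
    by simp
qed

lemma simple_graph_image:
  assumes sg: "simple_graph V E" and inj: "inj_on f V"
  shows "simple_graph (f ` V) ((`) f ` E)"
  unfolding simple_graph_def
proof
  fix e' assume "e' \<in> (`) f ` E"
  then obtain e where e: "e \<in> E" "e' = f ` e"
    by blast
  then obtain u v where uv: "e = {u, v}" "u \<noteq> v" "u \<in> V" "v \<in> V"
    using simple_graph_edgeE[OF sg] by metis
  then have "f u \<noteq> f v"
    using inj_on_contraD[OF inj] by blast
  then show "\<exists>u v. e' = {u, v} \<and> u \<noteq> v \<and> u \<in> f ` V \<and> v \<in> f ` V"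
    using e uv by auto
qed

lemma graph_connected_image:
  assumes "graph_connected V E"
  shows "graph_connected (f ` V) ((`) f ` E)"
  unfolding graph_connected_def
proof (intro ballI)
  fix u' v' assume "u' \<in> f ` V" "v' \<in> f ` V"
  then obtain u v where uv: "u \<in> V" "v \<in> V" "u' = f u" "v' = f v"
    by blast
  then obtain W where W: "walk E W" "hd W = u" "last W = v"
    using assms unfolding graph_connected_def by blast
  then have "W \<noteq> []"
    using walk_nonempty by blast
  then show "\<exists>W. walk ((`) f ` E) W \<and> hd W = u' \<and> last W = v'"
    using walk_map[OF W(1)] W uv by (intro exI[of _ "map f W"]) (simp add: hd_map last_map)
qed

lemma cycles_edge_disjoint_image:
  assumes sg: "simple_graph V E" and inj: "inj_on f V" and ca: "cycles_edge_disjoint E"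
  shows "cycles_edge_disjoint ((`) f ` E)"
  unfolding cycles_edge_disjoint_def
proof (intro ballI allI impI)
  define g where "g = inv_into V f"
  have EV: "\<forall>e\<in>E. e \<subseteq> V"
    using simple_graph_edge_subset[OF sg] by blast
  have gf: "\<forall>x\<in>V. g (f x) = x" and fg: "\<forall>y\<in>f ` V. f (g y) = y"
    unfolding g_def using inj by (simp_all add: f_inv_into_f)
  have ginj: "inj_on g (f ` V)"
    unfolding g_def by (rule inj_on_inv_into) simp
  have gE: "(`) g ` (`) f ` E = E"
    using image_image_edges[where E = E and V = V and g = g and f = f, OF EV gf] .
  have pullback: "is_cycle E (map g C)" "(`) f ` (`) g ` cycle_edges C = cycle_edges C"
    if cyc: "is_cycle ((`) f ` E) C" for C
  proof -
    have sub: "set C \<subseteq> f ` V"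
      using is_cycle_vertices_subset[OF simple_graph_image[OF sg inj] cyc] .
    have "is_cycle ((`) g ` (`) f ` E) (map g C)"
      by (rule is_cycle_map[OF cyc inj_on_subset[OF ginj sub]])
    then show "is_cycle E (map g C)"
      unfolding gE .
    have "\<forall>e\<in>cycle_edges C. e \<subseteq> f ` V"
      using sub cycle_edges_subset by blast
    then show "(`) f ` (`) g ` cycle_edges C = cycle_edges C"
      using image_image_edges[where E = "cycle_edges C" and V = "f ` V" and g = f and f = g] fg
      by blast
  qed
  fix e' C1 C2
  assume C: "is_cycle ((`) f ` E) C1 \<and> is_cycle ((`) f ` E) C2 \<and> e' \<in> cycle_edges C1 \<and> e' \<in> cycle_edges C2"
  have "g ` e' \<in> cycle_edges (map g C1)" "g ` e' \<in> cycle_edges (map g C2)"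
    unfolding cycle_edges_map using C by (simp_all add: imageI)
  moreover have "e' \<in> (`) f ` E"
    using C unfolding is_cycle_def by blast
  then have "g ` e' \<in> E"
    using imageI[of e' "(`) f ` E" "(`) g"] unfolding gE by blast
  ultimately have "cycle_edges (map g C1) = cycle_edges (map g C2)"
    using cycles_edge_disjointD[OF ca _ pullback(1) pullback(1)] C by blast
  then have "(`) f ` (`) g ` cycle_edges C1 = (`) f ` (`) g ` cycle_edges C2"
    unfolding cycle_edges_map by simp
  then show "cycle_edges C1 = cycle_edges C2"
    using pullback(2) C by simp
qed

lemma bipartite_image:
  assumes sg: "simple_graph V E" and inj: "inj_on f V" and bi: "bipartite E"
  shows "bipartite ((`) f ` E)"
proof -
  obtain A where A: "\<forall>a b. {a, b} \<in> E \<longrightarrow> (a \<in> A \<longleftrightarrow> b \<notin> A)"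
    using bi bipartite_iff_two_colouring[OF sg] by blast
  have "a' \<in> f ` (A \<inter> V) \<longleftrightarrow> b' \<notin> f ` (A \<inter> V)" if e': "{a', b'} \<in> (`) f ` E" for a' b'
  proof -
    obtain e where e: "{a', b'} = f ` e" "e \<in> E"
      using e' by (rule imageE)
    then obtain a b where ab: "e = {a, b}" "a \<in> V" "b \<in> V"
      using simple_graph_edgeE[OF sg] by metis
    then have "{a', b'} = {f a, f b}"
      using e by simp
    moreover have "f a \<in> f ` (A \<inter> V) \<longleftrightarrow> a \<in> A" "f b \<in> f ` (A \<inter> V) \<longleftrightarrow> b \<in> A"
      using inj_on_image_mem_iff[OF inj ab(2), of "A \<inter> V"] inj_on_image_mem_iff[OF inj ab(3), of "A \<inter> V"]
        ab(2,3) by simp_all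
    moreover have "a \<in> A \<longleftrightarrow> b \<notin> A"
      using A e(2) ab(1) by blast
    ultimately show ?thesis
      by (auto simp: doubleton_eq_iff)
  qed
  then show ?thesis
    using bipartite_iff_two_colouring[OF simple_graph_image[OF sg inj]] by blast
qed

lemma bicactus_image:
  assumes bc: "bicactus V E" and inj: "inj_on f V"
  shows "bicactus (f ` V) ((`) f ` E)"
proof -
  have "finite V" "V \<noteq> {}" and sg: "simple_graph V E" and "graph_connected V E"
    "cycles_edge_disjoint E" "bipartite E"
    using bc unfolding bicactus_def by auto
  then show ?thesis
    unfolding bicactus_def using simple_graph_image[OF sg inj] graph_connected_image
      cycles_edge_disjoint_image[OF sg inj] bipartite_image[OF sg inj] by simp
qed

lemma gdeg_image:
  assumes sg: "simple_graph V E" and inj: "inj_on f V" and x: "x \<in> V"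
  shows "gdeg ((`) f ` E) (f x) = gdeg E x"
proof -
  have "{e' \<in> (`) f ` E. f x \<in> e'} = (`) f ` {e \<in> E. x \<in> e}"
  proof (intro equalityI subsetI)
    fix e' assume "e' \<in> {e' \<in> (`) f ` E. f x \<in> e'}"
    then obtain e where e: "e \<in> E" "e' = f ` e" "f x \<in> f ` e"
      by blast
    then have "x \<in> e"
      using inj_on_image_mem_iff[OF inj x simple_graph_edge_subset[OF sg e(1)]] by blast
    then show "e' \<in> (`) f ` {e \<in> E. x \<in> e}"
      using e by blast
  qed auto
  moreover have "inj_on ((`) f) {e \<in> E. x \<in> e}"
    by (rule inj_on_subset[OF inj_on_image_Pow[OF inj]]) (use simple_graph_edge_subset[OF sg] in blast)
  ultimately show ?thesis
    unfolding gdeg_def by (simp add: card_image)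
qed
lemma degree_mset_image:
  assumes bc: "bicactus V E" and inj: "inj_on f V"
  shows "image_mset (gdeg ((`) f ` E)) (mset_set (f ` V)) = image_mset (gdeg E) (mset_set V)"
proof -
  have sg: "simple_graph V E" and fin: "finite V"
    using bc unfolding bicactus_def by auto
  have "image_mset (gdeg ((`) f ` E)) (mset_set (f ` V)) = image_mset (\<lambda>x. gdeg ((`) f ` E) (f x)) (mset_set V)"
    unfolding image_mset_mset_set[OF inj, symmetric] by (simp add: multiset.map_comp comp_def)
  also have "\<dots> = image_mset (gdeg E) (mset_set V)"
    using gdeg_image[OF sg inj] fin by (intro image_mset_cong) simp
  finally show ?thesis .
qed

lemma degree_mset_glue:
  assumes fin: "finite V1" "finite V2" and V12: "V1 \<inter> V2 = {v}"
    and sg: "simple_graph V1 E1" "simple_graph V2 E2"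
  shows "image_mset (gdeg (E1 \<union> E2)) (mset_set (V1 \<union> V2)) =
    add_mset (gdeg E1 v + gdeg E2 v)
      (image_mset (gdeg E1) (mset_set V1) - {#gdeg E1 v#} + (image_mset (gdeg E2) (mset_set V2) - {#gdeg E2 v#}))"
proof -
  have deg: "gdeg (E1 \<union> E2) x = gdeg E1 x + gdeg E2 x" for x
    using gdeg_Un simple_graph_finite fin sg edges_disjoint_if_one_common_vertex[OF sg V12] by metis
  have v: "v \<in> V1" "v \<in> V2"
    using V12 by auto
  have split: "mset_set (V1 \<union> V2) = add_mset v (mset_set (V1 - {v}) + mset_set (V2 - {v}))"
  proof -
    have "V1 \<union> V2 = insert v ((V1 - {v}) \<union> (V2 - {v}))" "(V1 - {v}) \<inter> (V2 - {v}) = {}"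
      using V12 by auto
    then show ?thesis
      using fin by (simp add: mset_set_Union)
  qed
  have "image_mset (gdeg (E1 \<union> E2)) (mset_set (V1 - {v})) = image_mset (gdeg E1) (mset_set (V1 - {v}))"
    using deg gdeg_eq_0[OF sg(2)] V12 fin by (intro image_mset_cong) auto
  moreover have "image_mset (gdeg (E1 \<union> E2)) (mset_set (V2 - {v})) = image_mset (gdeg E2) (mset_set (V2 - {v}))"
    using deg gdeg_eq_0[OF sg(1)] V12 fin by (intro image_mset_cong) auto
  moreover have "image_mset h (mset_set (V - {v})) = image_mset h (mset_set V) - {#h v#}"
    if "finite V" "v \<in> V" for h :: "nat \<Rightarrow> nat" and V
    using mset_set.remove[OF that] by simp
  ultimately show ?thesis
    using split deg fin v by simp
qed

definition bicactus_realizable :: "nat multiset \<Rightarrow> bool" where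
  "bicactus_realizable D \<longleftrightarrow> (\<exists>V E. bicactus V E \<and> image_mset (gdeg E) (mset_set V) = D)"

lemma bicactus_realization_at:
  assumes D: "bicactus_realizable D" "y \<in># D" and S: "finite S" "u \<notin> S"
  obtains V E where "bicactus V E" "image_mset (gdeg E) (mset_set V) = D" "u \<in> V" "gdeg E u = y"
    "V \<inter> S = {}"
proof -
  obtain V0 E0 where VE: "bicactus V0 E0" "image_mset (gdeg E0) (mset_set V0) = D"
    using D(1) unfolding bicactus_realizable_def by blast
  have "finite V0"
    using VE(1) unfolding bicactus_def by simp
  then obtain x0 where x0: "x0 \<in> V0" "gdeg E0 x0 = y"
    using D(2) VE(2) by auto
  define N where "N = Suc (Max (insert u S))"
  have big: "a < N" if "a \<in> insert u S" for a
    using S(1) that unfolding N_def by (simp add: le_imp_less_Suc)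
  define f where "f x = (if x = x0 then u else x + N)" for x
  have inj: "inj_on f V0"
    unfolding inj_on_def f_def using big[of u] by auto
  have "f x \<notin> S" for x
    using S(2) big[of "x + N"] unfolding f_def by auto
  then have "f ` V0 \<inter> S = {}"
    by blast
  moreover have "f x0 = u"
    unfolding f_def by simp
  ultimately show ?thesis
    using that[of "f ` V0" "(`) f ` E0"] bicactus_image[OF VE(1) inj] degree_mset_image[OF VE(1) inj]
      gdeg_image[OF _ inj x0(1)] VE(1) VE(2) x0 unfolding bicactus_def by force
qed

lemma bicactus_realizable_glue:
  assumes D1: "bicactus_realizable D1" "y1 \<in># D1" and D2: "bicactus_realizable D2" "y2 \<in># D2"
  shows "bicactus_realizable (add_mset (y1 + y2) (D1 - {#y1#} + (D2 - {#y2#})))"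
proof -
  obtain V1 E1 where VE1: "bicactus V1 E1" "image_mset (gdeg E1) (mset_set V1) = D1"
    using D1(1) unfolding bicactus_realizable_def by blast
  have fin1: "finite V1"
    using VE1(1) unfolding bicactus_def by simp
  then obtain v where v: "v \<in> V1" "gdeg E1 v = y1"
    using D1(2) VE1(2) by auto
  obtain V2 E2 where VE2: "bicactus V2 E2" "image_mset (gdeg E2) (mset_set V2) = D2" "v \<in> V2"
    "gdeg E2 v = y2" "V2 \<inter> (V1 - {v}) = {}"
    by (rule bicactus_realization_at[OF D2, of "V1 - {v}" v]) (use fin1 in auto)
  have V12: "V1 \<inter> V2 = {v}"
    using v(1) VE2(3,5) by auto
  have "bicactus (V1 \<union> V2) (E1 \<union> E2)"
    using bicactus_glue[OF VE1(1) VE2(1) V12] .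
  moreover have "finite V2" "simple_graph V1 E1" "simple_graph V2 E2"
    using VE1(1) VE2(1) unfolding bicactus_def by auto
  ultimately show ?thesis
    unfolding bicactus_realizable_def
    using degree_mset_glue[OF fin1 _ V12] VE1(2) VE2(2,4) v(2) by metis
qed

lemma bicactus_vertex: "bicactus {a} {}"
  unfolding bicactus_def simple_graph_def graph_connected_def cycles_edge_disjoint_def bipartite_def
  by (auto intro!: exI[of _ "[a]"])

lemma bicactus_edge:
  assumes "a \<noteq> b"
  shows "bicactus {a, b} {{a, b}}"
proof -
  have "\<not> is_cycle {{a, b}} C" for C
  proof
    assume C: "is_cycle {{a, b}} C"
    then have "card (cycle_edges C) \<le> card {{a, b}}"
      unfolding is_cycle_def by (intro card_mono) auto
    then show False
      using card_cycle_edges[OF C] C unfolding is_cycle_def by simp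
  qed
  moreover have "graph_connected {a, b} {{a, b}}"
  proof (rule graph_connected_from_root[where r = a], intro ballI)
    fix u assume "u \<in> {a, b}"
    then consider "u = a" | "u = b"
      by blast
    then show "\<exists>W. walk {{a, b}} W \<and> hd W = a \<and> last W = u"
      by cases (intro exI[of _ "[a]"] exI[of _ "[a, b]"]; simp)+
  qed
  moreover have "\<forall>e\<in>{{a, b}}. card (e \<inter> {a}) = 1"
    using assms by auto
  ultimately show ?thesis
    using assms unfolding bicactus_def simple_graph_def cycles_edge_disjoint_def bipartite_def by blast
qed

lemma bicactus_square:
  fixes a b c d :: 'a
  assumes "distinct [a, b, c, d]"
  shows "bicactus {a, b, c, d} (cycle_edges [a, b, c, d])"
proof -
  let ?vs = "[a, b, c, d]"
  have E: "cycle_edges ?vs = {{d, a}, {a, b}, {b, c}, {c, d}}"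
    by (simp add: cycle_edges_conv_walk_edges)
  have C: "is_cycle (cycle_edges ?vs) ?vs"
    using assms unfolding is_cycle_def by simp
  have sg: "simple_graph {a, b, c, d} (cycle_edges ?vs)"
    using assms unfolding E simple_graph_def by auto
  have "graph_connected {a, b, c, d} (cycle_edges ?vs)"
    using walk_between[OF is_cycle_walk[OF C]] unfolding graph_connected_def by simp
  moreover have "cycles_edge_disjoint (cycle_edges ?vs)"
    using is_cycle_in_cycle_edges[OF C] unfolding cycles_edge_disjoint_def by metis
  moreover have "\<forall>x y. {x, y} \<in> cycle_edges ?vs \<longrightarrow> (x \<in> {a, c} \<longleftrightarrow> y \<notin> {a, c})"
    using assms unfolding E by (auto simp: doubleton_eq_iff)
  ultimately show ?thesis
    using sg bipartite_iff_two_colouring[OF sg] unfolding bicactus_def by blast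
qed

lemma bicactus_realizable_vertex: "bicactus_realizable {#0#}"
  unfolding bicactus_realizable_def gdeg_def
  using bicactus_vertex[of 0] by (intro exI[of _ "{0}"] exI[of _ "{}"]) simp

lemma bicactus_realizable_edge: "bicactus_realizable {#1, 1#}"
proof -
  have "{e \<in> {{0, 1}}. x \<in> e} = {{0, 1}}" if "x \<in> {0, 1 :: nat}" for x
    using that by auto
  then have "gdeg {{0, 1}} 0 = 1" "gdeg {{0, 1}} (1 :: nat) = 1"
    unfolding gdeg_def by simp_all
  then show ?thesis
    unfolding bicactus_realizable_def using bicactus_edge[of "0 :: nat" 1]
    by (intro exI[of _ "{0, 1}"] exI[of _ "{{0, 1}}"]) simp
qed

lemma bicactus_realizable_square: "bicactus_realizable {#2, 2, 2, 2#}"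
proof -
  let ?vs = "[0, 1, 2, 3 :: nat]"
  have C: "is_cycle (cycle_edges ?vs) ?vs"
    unfolding is_cycle_def by simp
  have "gdeg (cycle_edges ?vs) x = 2" if "x \<in> {0, 1, 2, 3}" for x
    using card_cycle_edges_at[OF C] that unfolding gdeg_def by simp
  then have "image_mset (gdeg (cycle_edges ?vs)) (mset_set {0, 1, 2, 3}) = {#2, 2, 2, 2#}"
    by simp
  then show ?thesis
    unfolding bicactus_realizable_def using bicactus_square[of "0 :: nat" 1 2 3] by fastforce
qed

lemma bicactus_realizable_add_leaf:
  "bicactus_realizable D \<Longrightarrow> y \<in># D \<Longrightarrow> bicactus_realizable (add_mset 1 (add_mset (y + 1) (D - {#y#})))"
  using bicactus_realizable_glue[OF _ _ bicactus_realizable_edge, of D y 1] by (simp add: add_mset_commute)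

lemma bicactus_realizable_add_square:
  "bicactus_realizable D \<Longrightarrow> y \<in># D \<Longrightarrow>
    bicactus_realizable (add_mset 2 (add_mset 2 (add_mset 2 (add_mset (y + 2) (D - {#y#})))))"
  using bicactus_realizable_glue[OF _ _ bicactus_realizable_square, of D y 2] by (simp add: add_mset_commute)

definition add_leaf :: "nat multiset \<Rightarrow> nat \<Rightarrow> nat multiset" where
  "add_leaf D y = add_mset 1 (add_mset (y + 1) (D - {#y#}))"

definition add_square :: "nat multiset \<Rightarrow> nat \<Rightarrow> nat multiset" where
  "add_square D y = add_mset 2 (add_mset 2 (add_mset 2 (add_mset (y + 2) (D - {#y#}))))"

lemma bicactus_realizable_add_leaf':
  "bicactus_realizable D \<Longrightarrow> y \<in># D \<Longrightarrow> bicactus_realizable (add_leaf D y)"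
  unfolding add_leaf_def by (rule bicactus_realizable_add_leaf)

lemma bicactus_realizable_add_square':
  "bicactus_realizable D \<Longrightarrow> y \<in># D \<Longrightarrow> bicactus_realizable (add_square D y)"
  unfolding add_square_def by (rule bicactus_realizable_add_square)

definition admissible :: "nat multiset \<Rightarrow> bool" where
  "admissible D \<longleftrightarrow> (\<forall>x\<in>#D. 1 \<le> x) \<and> even (sum_mset D) \<and> 2 * size D \<le> sum_mset D
     \<and> 3 * sum_mset D + 2 * count D 1 + 8 \<le> 8 * size D
     \<and> 3 * sum_mset D + size (filter_mset odd D) + 8 \<le> 8 * size D
     \<and> 2 \<le> size (filter_mset odd D)"

definition tree_degrees :: "nat multiset \<Rightarrow> bool" where
  "tree_degrees D \<longleftrightarrow> (\<forall>x\<in>#D. 1 \<le> x) \<and> 2 \<le> size D \<and> sum_mset D + 2 = 2 * size D"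

lemma sum_mset_lower: "\<forall>x\<in>#M. k \<le> x \<Longrightarrow> k * size M \<le> sum_mset M"
  by (induction M) auto

lemma sum_mset_upper: "\<forall>x\<in>#M. x \<le> k \<Longrightarrow> sum_mset M \<le> k * size M"
  by (induction M) auto

lemma mset_split_one: "1 \<in># D \<Longrightarrow> x \<in># D \<Longrightarrow> x \<noteq> 1 \<Longrightarrow> \<exists>D0. D = add_mset 1 (add_mset x D0)"
proof -
  assume a: "1 \<in># D" "x \<in># D" "x \<noteq> 1"
  obtain M where M: "D = add_mset 1 M" using a(1) by (metis multi_member_split)
  then have "x \<in># M" using a by auto
  then obtain D0 where "M = add_mset x D0" by (metis multi_member_split)
  then show ?thesis using M by blast
qed


lemma size_by_degree:
  "\<forall>x\<in>#(D::nat multiset). 1 \<le> x \<Longrightarrow> size D = count D 1 + count D 2 + size (filter_mset (\<lambda>x. 3 \<le> x) D)"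
proof (induction D)
  case (add x D)
  then have IH: "size D = count D 1 + count D 2 + size (filter_mset (\<lambda>x. 3 \<le> x) D)" by simp
  have "x = 1 \<or> x = 2 \<or> 3 \<le> x" using add.prems by fastforce
  then show ?case using IH by (elim disjE) simp_all
qed simp

lemma sum_by_degree:
  "\<forall>x\<in>#(D::nat multiset). 1 \<le> x \<Longrightarrow> sum_mset D = count D 1 + 2 * count D 2 + sum_mset (filter_mset (\<lambda>x. 3 \<le> x) D)"
proof (induction D)
  case (add x D)
  then have IH: "sum_mset D = count D 1 + 2 * count D 2 + sum_mset (filter_mset (\<lambda>x. 3 \<le> x) D)" by simp
  have "x = 1 \<or> x = 2 \<or> 3 \<le> x" using add.prems by fastforce
  then show ?case using IH by (elim disjE) simp_all
qed simp

lemma odd_count_by_degree: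
  "\<forall>x\<in>#(D::nat multiset). 1 \<le> x \<Longrightarrow> size (filter_mset odd D) = count D 1 + size (filter_mset odd (filter_mset (\<lambda>x. 3 \<le> x) D))"
proof (induction D)
  case (add x D)
  then have IH: "size (filter_mset odd D) = count D 1 + size (filter_mset odd (filter_mset (\<lambda>x. 3 \<le> x) D))" by simp
  have "x = 1 \<or> x = 2 \<or> 3 \<le> x" using add.prems by fastforce
  then show ?case using IH by (elim disjE) simp_all
qed simp

lemma mset_split_three_twos: "x \<in># (D::nat multiset) \<Longrightarrow> 3 \<le> count D 2 \<Longrightarrow> x \<noteq> 2 \<Longrightarrow> \<exists>D0. D = add_mset 2 (add_mset 2 (add_mset 2 (add_mset x D0)))"
proof -
  assume a: "x \<in># D" "3 \<le> count D 2" "x \<noteq> 2"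
  obtain M1 where M1: "D = add_mset x M1" using a(1) by (metis multi_member_split)
  then have c1: "3 \<le> count M1 2" using a by auto
  then obtain M2 where M2: "M1 = add_mset 2 M2" by (metis multi_member_split count_greater_zero_iff
      less_le_trans numeral_3_eq_3 zero_less_Suc)
  then have c2: "2 \<le> count M2 2" using c1 by auto
  then obtain M3 where M3: "M2 = add_mset 2 M3" by (metis multi_member_split count_greater_zero_iff
      less_le_trans pos2)
  then have c3: "1 \<le> count M3 2" using c2 by auto
  then obtain D0 where D0: "M3 = add_mset 2 D0" by (metis multi_member_split count_greater_zero_iff
      less_le_trans zero_less_one)
  show ?thesis using M1 M2 M3 D0 by (auto simp: add_mset_commute)
qed

lemma even_sum_mset_iff: "even (sum_mset (D::nat multiset)) \<longleftrightarrow> even (size (filter_mset odd D))"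
  by (induction D) auto

definition reducible :: "nat multiset \<Rightarrow> bool" where
  "reducible D \<longleftrightarrow> (\<exists>D' y. size D' < size D \<and> (admissible D' \<or> tree_degrees D') \<and> y \<in># D' \<and>
     (D = add_leaf D' y \<or> D = add_square D' y))"

lemma reducible_by_leaf:
  assumes "D = add_mset 1 (add_mset x D0)" "2 \<le> x"
    "admissible (add_mset (x - 1) D0) \<or> tree_degrees (add_mset (x - 1) D0)"
  shows "reducible D"
  unfolding reducible_def add_leaf_def
  by (intro exI[of _ "add_mset (x - 1) D0"] exI[of _ "x - 1"]) (use assms in auto)

lemma reducible_by_square:
  assumes "D = add_mset 2 (add_mset 2 (add_mset 2 (add_mset x D0)))" "3 \<le> x"
    "admissible (add_mset (x - 2) D0) \<or> tree_degrees (add_mset (x - 2) D0)"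
  shows "reducible D"
  unfolding reducible_def add_square_def
  by (intro exI[of _ "add_mset (x - 2) D0"] exI[of _ "x - 2"]) (use assms in auto)

lemma even_cases: "even (S::nat) \<Longrightarrow> 2 * n \<le> S \<Longrightarrow> S = 2 * n \<or> 2 * n + 2 \<le> S"
  by presburger

lemma reducible_three_twos_large:
  assumes g: "admissible D" and t: "3 \<le> count D 2" and x: "x \<in># D" "4 \<le> x"
  shows "reducible D"
proof -
  obtain D0 where D: "D = add_mset 2 (add_mset 2 (add_mset 2 (add_mset x D0)))" using mset_split_three_twos[OF x(1) t] x by auto
  let ?D' = "add_mset (x - 2) D0"
  have px: "odd (x - 2) = odd x" using x by presburger
  have sD: "size D = size D0 + 4" "sum_mset D = sum_mset D0 + x + 6" "count D 1 = count D0 1"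
    "size (filter_mset odd D) = size (filter_mset odd D0) + (if odd x then 1 else 0)" using D x by auto
  have sD': "size ?D' = size D0 + 1" "sum_mset ?D' = sum_mset D0 + x - 2" "count ?D' 1 = count D0 1"
    "size (filter_mset odd ?D') = size (filter_mset odd D0) + (if odd x then 1 else 0)" using x px by auto
  have pos: "\<forall>y\<in>#?D'. 1 \<le> y" using g x unfolding admissible_def D by auto
  have gD: "even (sum_mset D)" "2 * size D \<le> sum_mset D" "3 * sum_mset D + 2 * count D 1 + 8 \<le> 8 * size D"
    "3 * sum_mset D + size (filter_mset odd D) + 8 \<le> 8 * size D" "2 \<le> size (filter_mset odd D)"
    using g unfolding admissible_def by auto
  have ev': "even (sum_mset ?D')"
  proof -
    have "sum_mset D = sum_mset ?D' + 8" using sD sD' x by simp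
    then show ?thesis using gD(1) by simp
  qed
  consider "sum_mset D = 2 * size D" | "2 * size D + 2 \<le> sum_mset D" using even_cases[OF gD(1,2)] by blast
  then have "admissible ?D' \<or> tree_degrees ?D'"
  proof cases
    case 1
    have "tree_degrees ?D'" unfolding tree_degrees_def using pos sD sD' 1 x by auto
    then show ?thesis by simp
  next
    case 2
    have "admissible ?D'" unfolding admissible_def using pos ev' sD sD' 2 gD x by auto
    then show ?thesis by simp
  qed
  then show ?thesis using reducible_by_square[OF D] x by simp
qed

lemma admissible_counts:
  assumes g: "admissible D"
  shows "size D = count D 1 + count D 2 + size (filter_mset (\<lambda>x. 3 \<le> x) D)"
    "sum_mset D = count D 1 + 2 * count D 2 + sum_mset (filter_mset (\<lambda>x. 3 \<le> x) D)"
    "size (filter_mset odd D) = count D 1 + size (filter_mset odd (filter_mset (\<lambda>x. 3 \<le> x) D))"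
    "3 * size (filter_mset (\<lambda>x. 3 \<le> x) D) \<le> sum_mset (filter_mset (\<lambda>x. 3 \<le> x) D)"
    "size (filter_mset odd (filter_mset (\<lambda>x. 3 \<le> x) D)) \<le> size (filter_mset (\<lambda>x. 3 \<le> x) D)"
proof -
  have pos: "\<forall>x\<in>#D. 1 \<le> x" using g unfolding admissible_def by simp
  show "size D = count D 1 + count D 2 + size (filter_mset (\<lambda>x. 3 \<le> x) D)" using size_by_degree[OF pos] .
  show "sum_mset D = count D 1 + 2 * count D 2 + sum_mset (filter_mset (\<lambda>x. 3 \<le> x) D)" using sum_by_degree[OF pos] .
  show "size (filter_mset odd D) = count D 1 + size (filter_mset odd (filter_mset (\<lambda>x. 3 \<le> x) D))" using odd_count_by_degree[OF pos] .
  show "3 * size (filter_mset (\<lambda>x. 3 \<le> x) D) \<le> sum_mset (filter_mset (\<lambda>x. 3 \<le> x) D)"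
    by (rule sum_mset_lower) auto
  show "size (filter_mset odd (filter_mset (\<lambda>x. 3 \<le> x) D)) \<le> size (filter_mset (\<lambda>x. 3 \<le> x) D)"
    by (rule size_filter_mset_lesseq)
qed

lemma reducible_three_twos_small:
  assumes g: "admissible D" and t: "3 \<le> count D 2" and le3: "\<forall>y\<in>#D. y \<le> 3"
  shows "reducible D"
proof -
  define D3 where "D3 = filter_mset (\<lambda>x. 3 \<le> x) D"
  note dc = admissible_counts[OF g, folded D3_def]
  have all3: "\<forall>y\<in>#D3. y = 3" using le3 unfolding D3_def by fastforce
  have s3: "sum_mset D3 = 3 * size D3" using sum_mset_upper[of D3 3] dc(4) all3 by simp
  have "filter_mset odd D3 = filter_mset (\<lambda>_. True) D3" using all3 by (intro filter_mset_cong0) auto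
  then have o3: "size (filter_mset odd D3) = size D3" by simp
  have gD: "\<forall>x\<in>#D. 1 \<le> x" "even (sum_mset D)" "2 * size D \<le> sum_mset D" "3 * sum_mset D + 2 * count D 1 + 8 \<le> 8 * size D"
    "3 * sum_mset D + size (filter_mset odd D) + 8 \<le> 8 * size D" "2 \<le> size (filter_mset odd D)"
    using g unfolding admissible_def by auto
  have h1: "size D3 \<ge> 1" using dc s3 o3 gD by linarith
  then have "D3 \<noteq> {#}" by auto
  then obtain z where "z \<in># D3" by (rule multiset_nonemptyE)
  then have three: "3 \<in># D" using all3 unfolding D3_def by auto
  show ?thesis
  proof (cases "sum_mset D = 2 * size D \<or> 3 * sum_mset D + 2 * count D 1 + 10 \<le> 8 * size D")
    case True
    note T = True
    obtain D0 where D: "D = add_mset 2 (add_mset 2 (add_mset 2 (add_mset 3 D0)))" using mset_split_three_twos[OF three t] by auto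
    let ?D' = "add_mset 1 D0"
    have sD: "size D = size D0 + 4" "sum_mset D = sum_mset D0 + 9" "count D 1 = count D0 1"
      "size (filter_mset odd D) = size (filter_mset odd D0) + 1" using D by auto
    have sD': "size ?D' = size D0 + 1" "sum_mset ?D' = sum_mset D0 + 1" "count ?D' 1 = count D0 1 + 1"
      "size (filter_mset odd ?D') = size (filter_mset odd D0) + 1" by auto
    have pos: "\<forall>y\<in>#?D'. 1 \<le> y" using gD unfolding D by auto
    have ev': "even (sum_mset ?D')" using gD(2) sD sD' by simp
    have "admissible ?D' \<or> tree_degrees ?D'"
    proof (cases "sum_mset D = 2 * size D")
      case True
      have "tree_degrees ?D'" unfolding tree_degrees_def using pos sD sD' True by auto
      then show ?thesis by simp
    next
      case False
      then have "3 * sum_mset D + 2 * count D 1 + 10 \<le> 8 * size D" using T by blast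
      moreover have "2 * size D + 2 \<le> sum_mset D" using even_cases[OF gD(2,3)] False by blast
      ultimately have "admissible ?D'" unfolding admissible_def using pos ev' sD sD' gD by auto
      then show ?thesis by simp
    qed
    then show ?thesis using reducible_by_square[OF D] by simp
  next
    case False
    then have c2: "2 * size D + 2 \<le> sum_mset D" "8 * size D < 3 * sum_mset D + 2 * count D 1 + 10"
      using even_cases[OF gD(2,3)] by auto
    have m1: "count D 1 \<ge> 1" using dc s3 o3 gD c2 by linarith
    have o4: "size (filter_mset odd D) \<ge> 4" using dc s3 o3 gD c2 m1 by linarith
    have one: "1 \<in># D" using m1 by (simp add: Suc_le_eq)
    obtain D0 where D: "D = add_mset 1 (add_mset 3 D0)" using mset_split_one[OF one three] by auto
    let ?D' = "add_mset 2 D0"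
    have sD: "size D = size D0 + 2" "sum_mset D = sum_mset D0 + 4" "count D 1 = count D0 1 + 1"
      "size (filter_mset odd D) = size (filter_mset odd D0) + 2" using D by auto
    have sD': "size ?D' = size D0 + 1" "sum_mset ?D' = sum_mset D0 + 2" "count ?D' 1 = count D0 1"
      "size (filter_mset odd ?D') = size (filter_mset odd D0)" by auto
    have pos: "\<forall>y\<in>#?D'. 1 \<le> y" using gD unfolding D by auto
    have ev': "even (sum_mset ?D')" using gD(2) sD sD' by simp
    have "admissible ?D'" unfolding admissible_def using pos ev' sD sD' gD c2 o4 by auto
    then show ?thesis using reducible_by_leaf[OF D] by simp
  qed
qed

lemma reducible_few_twos:
  assumes g: "admissible D" and t: "count D 2 \<le> 2"
  shows "reducible D"
proof -
  define D3 where "D3 = filter_mset (\<lambda>x. 3 \<le> x) D"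
  note dc = admissible_counts[OF g, folded D3_def]
  have gD: "\<forall>x\<in>#D. 1 \<le> x" "even (sum_mset D)" "2 * size D \<le> sum_mset D" "3 * sum_mset D + 2 * count D 1 + 8 \<le> 8 * size D"
    "3 * sum_mset D + size (filter_mset odd D) + 8 \<le> 8 * size D" "2 \<le> size (filter_mset odd D)"
    using g unfolding admissible_def by auto
  have m1: "count D 1 \<ge> 2" using dc gD t by linarith
  have "0 < count D 1" using m1 by linarith
  then have one: "1 \<in># D" using count_greater_zero_iff by metis
  show ?thesis
  proof (cases "\<exists>x\<in>#D. 3 \<le> x \<and> odd x")
    case True
    then obtain x where x: "x \<in># D" "3 \<le> x" "odd x" by blast
    have "x \<in># filter_mset odd D3" using x unfolding D3_def by simp
    then have "filter_mset odd D3 \<noteq> {#}" by auto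
    then have "size (filter_mset odd D3) \<noteq> 0" by simp
    then have "size (filter_mset odd D3) \<ge> 1" by linarith
    then have o3: "size (filter_mset odd D) \<ge> 3" using dc m1 by linarith
    have "even (size (filter_mset odd D))" using even_sum_mset_iff gD(2) by blast
    then have o4: "size (filter_mset odd D) \<ge> 4" using o3 by presburger
    obtain D0 where D: "D = add_mset 1 (add_mset x D0)" using mset_split_one[OF one x(1)] x by auto
    let ?D' = "add_mset (x - 1) D0"
    have px: "even (x - 1)" using x by presburger
    have sD: "size D = size D0 + 2" "sum_mset D = sum_mset D0 + x + 1" "count D 1 = count D0 1 + 1"
      "size (filter_mset odd D) = size (filter_mset odd D0) + 2" using D x by auto
    have sD': "size ?D' = size D0 + 1" "sum_mset ?D' = sum_mset D0 + x - 1" "count ?D' 1 = count D0 1"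
      "size (filter_mset odd ?D') = size (filter_mset odd D0)" using x px by auto
    have pos: "\<forall>y\<in>#?D'. 1 \<le> y" using gD x unfolding D by auto
    have ev': "even (sum_mset ?D')"
    proof -
      have "sum_mset D = sum_mset ?D' + 2" using sD sD' x by simp
      then show ?thesis using gD(2) by simp
    qed
    have "admissible ?D'" unfolding admissible_def using pos ev' sD sD' gD o4 x by auto
    then show ?thesis using reducible_by_leaf[OF D] x by simp
  next
    case False
    then have nodd: "\<forall>x\<in>#D3. even x" unfolding D3_def by auto
    then have "filter_mset odd D3 = {#}" by simp
    then have o3: "size (filter_mset odd D3) = 0" by simp
    have "D3 \<noteq> {#}"
    proof
      assume "D3 = {#}"
      then show False using dc m1 gD by simp
    qed
    then obtain x where xD3: "x \<in># D3" by (rule multiset_nonemptyE)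
    then have x: "x \<in># D" "3 \<le> x" "even x" using nodd unfolding D3_def by auto
    then have x4: "4 \<le> x" by presburger
    obtain D0 where D: "D = add_mset 1 (add_mset x D0)" using mset_split_one[OF one x(1)] x by auto
    let ?D' = "add_mset (x - 1) D0"
    have px: "odd (x - 1)" using x4 x by presburger
    have sD: "size D = size D0 + 2" "sum_mset D = sum_mset D0 + x + 1" "count D 1 = count D0 1 + 1"
      "size (filter_mset odd D) = size (filter_mset odd D0) + 1" using D x by auto
    have sD': "size ?D' = size D0 + 1" "sum_mset ?D' = sum_mset D0 + x - 1" "count ?D' 1 = count D0 1"
      "size (filter_mset odd ?D') = size (filter_mset odd D0) + 1" using x4 px by auto
    have pos: "\<forall>y\<in>#?D'. 1 \<le> y" using gD x unfolding D by auto
    have ev': "even (sum_mset ?D')"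
    proof -
      have "sum_mset D = sum_mset ?D' + 2" using sD sD' x by simp
      then show ?thesis using gD(2) by simp
    qed
    have oo: "size (filter_mset odd D) = count D 1" using dc o3 by simp
    have "admissible ?D'" unfolding admissible_def using pos ev' sD sD' gD x4 oo m1 by auto
    then show ?thesis using reducible_by_leaf[OF D] x4 by simp
  qed
qed

lemma admissible_reducible: "admissible D \<Longrightarrow> reducible D"
proof -
  assume g: "admissible D"
  show "reducible D"
  proof (cases "count D 2 \<le> 2")
    case True then show ?thesis using reducible_few_twos g by blast
  next
    case False
    then have t: "3 \<le> count D 2" by simp
    show ?thesis
    proof (cases "\<exists>x\<in>#D. 4 \<le> x")
      case True
      then obtain x where "x \<in># D" "4 \<le> x" by blast
      then show ?thesis using reducible_three_twos_large[OF g t] by blast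
    next
      case False
      then have "\<forall>y\<in>#D. y \<le> 3" by auto
      then show ?thesis using reducible_three_twos_small[OF g t] by blast
    qed
  qed
qed

lemma tree_degrees_reducible:
  assumes T: "tree_degrees D" and n3: "3 \<le> size D"
  shows "reducible D"
proof -
  have pos: "\<forall>x\<in>#D. 1 \<le> x" and sm: "sum_mset D + 2 = 2 * size D"
    using T unfolding tree_degrees_def by auto
  have one: "1 \<in># D"
  proof (rule ccontr)
    assume "1 \<notin># D"
    then have "\<forall>x\<in>#D. 2 \<le> x"
      using pos by (metis One_nat_def Suc_1 Suc_le_eq le_neq_implies_less)
    then have "2 * size D \<le> sum_mset D"
      by (rule sum_mset_lower)
    then show False
      using sm by simp
  qed
  have "\<exists>x\<in>#D. 2 \<le> x"
  proof (rule ccontr)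
    assume "\<not> (\<exists>x\<in>#D. 2 \<le> x)"
    then have "sum_mset D \<le> 1 * size D"
      by (intro sum_mset_upper) auto
    then show False
      using sm n3 by simp
  qed
  then obtain x where x: "x \<in># D" "2 \<le> x"
    by blast
  obtain D0 where D: "D = add_mset 1 (add_mset x D0)"
    using mset_split_one[OF one x(1)] x(2) by auto
  have "tree_degrees (add_mset (x - 1) D0)"
    unfolding tree_degrees_def using pos sm n3 x D by auto
  then show ?thesis
    using reducible_by_leaf[OF D x(2)] by simp
qed

lemma admissible_or_tree_realizable:
  "admissible D \<or> tree_degrees D \<Longrightarrow> bicactus_realizable D"
proof (induction "size D" arbitrary: D rule: less_induct)
  case less
  show ?case
  proof (cases "tree_degrees D \<and> size D = 2")
    case True
    then have "size D = Suc (Suc 0)"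
      by simp
    then obtain a N where D: "D = add_mset a N"
      using size_eq_Suc_imp_eq_union by blast
    then have "size N = 1"
      using \<open>size D = Suc (Suc 0)\<close> by simp
    then obtain b where "N = {#b#}"
      using size_1_singleton_mset by blast
    then have "D = {#a, b#}"
      using D by simp
    moreover have "a = 1" "b = 1"
      using True calculation unfolding tree_degrees_def by auto
    ultimately have "D = {#1, 1#}"
      by simp
    then show ?thesis
      using bicactus_realizable_edge by simp
  next
    case False
    have "reducible D"
    proof (cases "tree_degrees D")
      case True
      then have "3 \<le> size D"
        using False unfolding tree_degrees_def by simp
      then show ?thesis
        using tree_degrees_reducible True by blast
    next
      case False
      then show ?thesis
        using less.prems admissible_reducible by blast
    qed
    then obtain D' y where D': "size D' < size D" "admissible D' \<or> tree_degrees D'" "y \<in># D'"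
      "D = add_leaf D' y \<or> D = add_square D' y"
      unfolding reducible_def by blast
    then show ?thesis
      using less.hyps[OF D'(1,2)] bicactus_realizable_add_leaf' bicactus_realizable_add_square' by metis
  qed
qed

lemma is_path_Cons_Cons: "is_path E (x # y # xs) \<longleftrightarrow> {x, y} \<in> E \<and> is_path E (y # xs)"
  unfolding is_path_def
proof safe
  fix i assume A: "\<forall>i. Suc i < length (x # y # xs) \<longrightarrow> {(x # y # xs) ! i, (x # y # xs) ! Suc i} \<in> E"
    and i: "Suc i < length (y # xs)"
  show "{(y # xs) ! i, (y # xs) ! Suc i} \<in> E"
    using A[rule_format, of "Suc i"] i by simp
next
  assume "\<forall>i. Suc i < length (x # y # xs) \<longrightarrow> {(x # y # xs) ! i, (x # y # xs) ! Suc i} \<in> E"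
  then show "{x, y} \<in> E"
    by (metis length_Cons nth_Cons_0 nth_Cons_Suc zero_less_Suc Suc_less_eq)
next
  fix i assume "{x, y} \<in> E" "\<forall>i. Suc i < length (y # xs) \<longrightarrow> {(y # xs) ! i, (y # xs) ! Suc i} \<in> E"
    "Suc i < length (x # y # xs)"
  then show "{(x # y # xs) ! i, (x # y # xs) ! Suc i} \<in> E"
    by (cases i) auto
qed

lemma is_path_iff_walk: "is_path E vs \<longleftrightarrow> walk E vs"
proof (induction vs rule: induct_list012)
  case (3 x y zs)
  then show ?case
    by (simp add: is_path_Cons_Cons)
qed (simp_all add: is_path_def)

lemma is_cycle_edges_iff: "is_cycle_edges E C \<longleftrightarrow> (\<exists>vs. is_cycle E vs \<and> C = cycle_edges vs)"
  unfolding is_cycle_edges_def is_cycle_def cycle_edges_def by auto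

lemma realizes_iff: "realizes n d E \<longleftrightarrow> simple_graph {1..n} E \<and> (\<forall>i\<in>{1..n}. gdeg E i = d i)"
  unfolding realizes_def simple_graph_on_def simple_graph_def by simp

lemma is_bicactus_iff_bicactus:
  assumes "1 \<le> n"
  shows "is_bicactus n E \<longleftrightarrow> bicactus {1..n} E"
proof -
  have "is_cactus n E \<longleftrightarrow> simple_graph {1..n} E \<and> graph_connected {1..n} E \<and> cycles_edge_disjoint E"
    unfolding is_cactus_def simple_graph_on_def simple_graph_def connected_graph_def graph_connected_def
      cycles_edge_disjoint_def is_path_iff_walk is_cycle_edges_iff by blast
  moreover have "is_bipartite n E \<longleftrightarrow> bipartite E" if "simple_graph {1..n} E"
  proof
    assume "bipartite E"
    then obtain A where A: "\<forall>e\<in>E. card (e \<inter> A) = 1"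
      unfolding bipartite_def by blast
    have "e \<inter> (A \<inter> {1..n}) = e \<inter> A" if "e \<in> E" for e
      using simple_graph_edge_subset[OF \<open>simple_graph {1..n} E\<close> that] by blast
    then show "is_bipartite n E"
      unfolding is_bipartite_def using A by (intro exI[of _ "A \<inter> {1..n}"]) simp
  qed (auto simp: is_bipartite_def bipartite_def)
  ultimately show ?thesis
    unfolding is_bicactus_def bicactus_def using assms by auto
qed

lemma handshake:
  assumes "finite V" "simple_graph V E"
  shows "(\<Sum>v\<in>V. gdeg E v) = 2 * card E"
proof -
  have finE: "finite E"
    using simple_graph_finite[OF assms] .
  have "(\<Sum>v\<in>V. gdeg E v) = (\<Sum>v\<in>V. \<Sum>e\<in>E. if v \<in> e then 1 else 0)"
    unfolding gdeg_def using finE by (simp add: sum.inter_filter[symmetric])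
  also have "\<dots> = (\<Sum>e\<in>E. \<Sum>v\<in>V. if v \<in> e then 1 else 0)"
    by (rule sum.swap)
  also have "\<dots> = (\<Sum>e\<in>E. 2)"
  proof (rule sum.cong[OF refl])
    fix e assume "e \<in> E"
    then obtain u w where uw: "e = {u, w}" "u \<noteq> w" "u \<in> V" "w \<in> V"
      using simple_graph_edgeE[OF assms(2)] by metis
    have "(\<Sum>v\<in>V. if v \<in> e then 1 else 0) = card {v \<in> V. v \<in> e}"
      using assms(1) by (simp add: sum.inter_filter[symmetric])
    also have "{v \<in> V. v \<in> e} = {u, w}"
      using uw by auto
    finally show "(\<Sum>v\<in>V. if v \<in> e then 1 else 0) = (2::nat)"
      using uw by simp
  qed
  finally show ?thesis
    by simp
qed

lemma degree_mset_statistics: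
  fixes d :: "nat \<Rightarrow> nat"
  assumes "finite A"
  shows "size (image_mset d (mset_set A)) = card A"
    "sum_mset (image_mset d (mset_set A)) = (\<Sum>i\<in>A. d i)"
    "size (filter_mset P (image_mset d (mset_set A))) = card {i \<in> A. P (d i)}"
    "count (image_mset d (mset_set A)) x = card {i \<in> A. d i = x}"
proof -
  show "size (image_mset d (mset_set A)) = card A"
    by simp
  show "sum_mset (image_mset d (mset_set A)) = (\<Sum>i\<in>A. d i)"
    by (simp add: sum_unfold_sum_mset)
  show "size (filter_mset P (image_mset d (mset_set A))) = card {i \<in> A. P (d i)}"
    using image_mset_filter_mset_swap[of d P "mset_set A", symmetric] assms by simp
  have "count (image_mset d (mset_set A)) x = size (filter_mset (\<lambda>y. y = x) (image_mset d (mset_set A)))"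
    by (simp add: filter_eq_replicate_mset)
  also have "\<dots> = card {i \<in> A. d i = x}"
    using image_mset_filter_mset_swap[of d "\<lambda>y. y = x" "mset_set A", symmetric] assms by simp
  finally show "count (image_mset d (mset_set A)) x = card {i \<in> A. d i = x}" .
qed

lemma image_mset_mset_set_eq_bij_betw:
  assumes "finite A" "finite B" "image_mset g (mset_set A) = image_mset h (mset_set B)"
  shows "\<exists>f. bij_betw f A B \<and> (\<forall>x\<in>A. h (f x) = g x)"
  using assms
proof (induction A arbitrary: B rule: finite_induct)
  case empty
  then have "B = {}"
    by (metis image_mset_is_empty_iff mset_set_empty_iff)
  then show ?case
    by (simp add: bij_betw_def)
next
  case (insert a A)
  have "g a \<in># image_mset h (mset_set B)"
    using insert.prems(2) insert.hyps by (metis image_mset_add_mset mset_set.insert union_single_eq_member)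
  then obtain b where b: "b \<in> B" "h b = g a"
    using insert.prems(1) by auto
  have "image_mset h (mset_set B) = add_mset (h b) (image_mset h (mset_set (B - {b})))"
    using b insert.prems(1) by (simp add: mset_set.remove)
  then have "image_mset g (mset_set A) = image_mset h (mset_set (B - {b}))"
    using insert.prems(2) insert.hyps b by simp
  then obtain f0 where f0: "bij_betw f0 A (B - {b})" "\<forall>x\<in>A. h (f0 x) = g x"
    using insert.IH[of "B - {b}"] insert.prems(1) by blast
  define f where "f x = (if x = a then b else f0 x)" for x
  have "inj_on f0 A" "f0 ` A = B - {b}"
    using f0(1) unfolding bij_betw_def by auto
  then have "bij_betw f (insert a A) B"
    unfolding bij_betw_def f_def inj_on_def using insert.hyps b(1) by auto
  moreover have "\<forall>x\<in>insert a A. h (f x) = g x"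
    unfolding f_def using f0 b insert.hyps by auto
  ultimately show ?case
    by blast
qed

lemma floor_bound_iff:
  fixes S n a b :: nat
  assumes "even S"
  shows "int (S div 2) \<le> \<lfloor>(4 * (real n - 1) - max (real a) ((real a + real b) / 2)) / 3\<rfloor> \<longleftrightarrow>
    3 * S + 2 * a + 8 \<le> 8 * n \<and> 3 * S + a + b + 8 \<le> 8 * n"
proof -
  obtain m where m: "S = 2 * m"
    using assms by blast
  have "int (S div 2) \<le> \<lfloor>(4 * (real n - 1) - max (real a) ((real a + real b) / 2)) / 3\<rfloor> \<longleftrightarrow>
      real m \<le> (4 * (real n - 1) - max (real a) ((real a + real b) / 2)) / 3"
    using m by (simp add: le_floor_iff)
  also have "\<dots> \<longleftrightarrow> 6 * real m + 2 * real a + 8 \<le> 8 * real n \<and> 6 * real m + real a + real b + 8 \<le> 8 * real n"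
    by (auto simp: max_def field_simps)
  also have "\<dots> \<longleftrightarrow> 3 * S + 2 * a + 8 \<le> 8 * n \<and> 3 * S + a + b + 8 \<le> 8 * n"
    unfolding m by linarith
  finally show ?thesis .
qed

lemma odd_degrees_card:
  assumes "\<forall>i\<in>{1..n}. 1 \<le> d i"
  shows "card {i \<in> {1..n}. odd (d i)} = mu1 n d + mu_odd n d"
proof -
  have "{i \<in> {1..n}. odd (d i)} = {i \<in> {1..n}. d i = 1} \<union> {i \<in> {1..n}. odd (d i) \<and> d i > 1}"
    using assms by force
  moreover have "{i \<in> {1..n}. d i = 1} \<inter> {i \<in> {1..n}. odd (d i) \<and> d i > 1} = {}"
    by auto
  ultimately show ?thesis
    unfolding mu1_def mu_odd_def by (simp add: card_Un_disjoint)
qed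

lemma bicactus_realization_bounds:
  assumes E: "realizes n d E" "is_bicactus n E" and n: "1 \<le> n" and d1: "2 \<le> d 1"
  shows "3 * (\<Sum>i=1..n. d i) + 2 * mu1 n d + 8 \<le> 8 * n"
    "3 * (\<Sum>i=1..n. d i) + card {i \<in> {1..n}. odd (d i)} + 8 \<le> 8 * n"
proof -
  have bc: "bicactus {1..n} E"
    using E(2) is_bicactus_iff_bicactus[OF n] by simp
  have sg: "simple_graph {1..n} E" and deg: "\<forall>i\<in>{1..n}. gdeg E i = d i"
    using E(1) unfolding realizes_iff by auto
  have "(\<Sum>i=1..n. d i) = (\<Sum>i=1..n. gdeg E i)"
    using deg by simp
  also have "\<dots> = 2 * card E"
    using handshake[OF _ sg] by simp
  finally have sum: "(\<Sum>i=1..n. d i) = 2 * card E" .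
  have "{v \<in> {1..n}. v \<noteq> 1 \<and> gdeg E v = 1} = {i \<in> {1..n}. d i = 1}"
    using deg d1 by force
  moreover have "{v \<in> {1..n}. odd (gdeg E v)} = {i \<in> {1..n}. odd (d i)}"
    using deg by force
  moreover have "leaf_bound {1..n} (card E) (gdeg E) 1" "odd_degree_bound {1..n} (card E) (gdeg E)"
    using bicactus_bounds[OF bc] n by auto
  ultimately show "3 * (\<Sum>i=1..n. d i) + 2 * mu1 n d + 8 \<le> 8 * n"
    "3 * (\<Sum>i=1..n. d i) + card {i \<in> {1..n}. odd (d i)} + 8 \<le> 8 * n"
    unfolding leaf_bound_def odd_degree_bound_def mu1_def sum by simp_all
qed

lemma bicactus_realization_exists:
  assumes ds: "degree_sequence n d" and S: "2 * n \<le> (\<Sum>i=1..n. d i)"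
    and odd: "2 \<le> card {i \<in> {1..n}. odd (d i)}"
    and B: "3 * (\<Sum>i=1..n. d i) + 2 * mu1 n d + 8 \<le> 8 * n"
      "3 * (\<Sum>i=1..n. d i) + card {i \<in> {1..n}. odd (d i)} + 8 \<le> 8 * n"
  shows "\<exists>E. realizes n d E \<and> is_bicactus n E"
proof -
  define D where "D = image_mset d (mset_set {1..n})"
  have stats: "size D = n" "sum_mset D = (\<Sum>i=1..n. d i)" "count D 1 = mu1 n d"
    "size (filter_mset odd D) = card {i \<in> {1..n}. odd (d i)}"
    unfolding D_def mu1_def using degree_mset_statistics[where A = "{1..n}" and d = d] by simp_all
  have "\<forall>x\<in>#D. 1 \<le> x" "even (sum_mset D)"
    using ds stats(2) unfolding degree_sequence_def D_def by auto
  then have "admissible D"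
    unfolding admissible_def stats using S odd B by simp
  then obtain V E where VE: "bicactus V E" "image_mset (gdeg E) (mset_set V) = D"
    using admissible_or_tree_realizable unfolding bicactus_realizable_def by blast
  have "finite V" and sg: "simple_graph V E" and "V \<noteq> {}"
    using VE(1) unfolding bicactus_def by auto
  then obtain f where f: "bij_betw f V {1..n}" "\<forall>x\<in>V. d (f x) = gdeg E x"
    using image_mset_mset_set_eq_bij_betw[of V "{1..n}" "gdeg E" d] VE(2) unfolding D_def by blast
  have inj: "inj_on f V" and fV: "f ` V = {1..n}"
    using f(1) unfolding bij_betw_def by auto
  have "{1..n} \<noteq> {}"
    using fV \<open>V \<noteq> {}\<close> by blast
  then have n: "1 \<le> n"
    by simp
  have bc: "bicactus {1..n} ((`) f ` E)"
    using bicactus_image[OF VE(1) inj] fV by simp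
  have "gdeg ((`) f ` E) i = d i" if "i \<in> {1..n}" for i
  proof -
    have "i \<in> f ` V"
      using that fV by simp
    then obtain x where "x \<in> V" "i = f x"
      by blast
    then show ?thesis
      using gdeg_image[OF sg inj] f(2) by simp
  qed
  then have "realizes n d ((`) f ` E)"
    unfolding realizes_iff using bc unfolding bicactus_def by simp
  then show ?thesis
    using bc is_bicactus_iff_bicactus[OF n] by blast
qed

theorem theorem7p3:
  fixes n :: nat and d :: "nat \<Rightarrow> nat"
  assumes "degree_sequence n d"
    and "n \<ge> 4" and "d 4 \<ge> 2"
    and "(\<Sum>i=1..n. d i) > 2 * n"
    and "mu_odd n d + mu1 n d \<ge> 2"
  shows "(\<exists>E. realizes n d E \<and> is_bicactus n E) \<longleftrightarrow>
    (let m = (\<Sum>i=1..n. d i) div 2;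
         beta = max (real (mu1 n d)) ((real (mu1 n d) + real (mu_odd n d)) / 2)
     in int m \<le> floor ((4 * (real n - 1) - beta) / 3))"
proof -
  have pos: "\<forall>i\<in>{1..n}. 1 \<le> d i" and even: "even (\<Sum>i=1..n. d i)"
    and "d 4 \<le> d 1"
    using assms(1,2) unfolding degree_sequence_def by auto
  then have d1: "2 \<le> d 1"
    using assms(3) by simp
  have odd: "card {i \<in> {1..n}. odd (d i)} = mu1 n d + mu_odd n d"
    using odd_degrees_card[OF pos] .
  have "(let m = (\<Sum>i=1..n. d i) div 2;
         beta = max (real (mu1 n d)) ((real (mu1 n d) + real (mu_odd n d)) / 2)
       in int m \<le> floor ((4 * (real n - 1) - beta) / 3)) \<longleftrightarrow>
      3 * (\<Sum>i=1..n. d i) + 2 * mu1 n d + 8 \<le> 8 * n \<and>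
      3 * (\<Sum>i=1..n. d i) + card {i \<in> {1..n}. odd (d i)} + 8 \<le> 8 * n"
    unfolding Let_def odd using floor_bound_iff[OF even] by (simp add: add.assoc)
  moreover have "1 \<le> n" "2 * n \<le> (\<Sum>i=1..n. d i)" "2 \<le> card {i \<in> {1..n}. odd (d i)}"
    using assms(2,4,5) odd by simp_all
  then have "(\<exists>E. realizes n d E \<and> is_bicactus n E) \<longleftrightarrow>
      3 * (\<Sum>i=1..n. d i) + 2 * mu1 n d + 8 \<le> 8 * n \<and>
      3 * (\<Sum>i=1..n. d i) + card {i \<in> {1..n}. odd (d i)} + 8 \<le> 8 * n"
    using bicactus_realization_bounds[where n = n and d = d] d1
      bicactus_realization_exists[OF assms(1)] by blast
  ultimately show ?thesis
    by simp
qed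

end
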